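(* Let $\mathcal{N}$ be the class of matroids having no minor isomorphic to $\mathsf{U}_{1,1}\oplus\mathsf{U}_{1,3}$ nor to $\mathsf{U}_{0,1}\oplus\mathsf{U}_{2,3}$, and let $\mathsf{M}\in\mathcal{N}$ be a matroid on $n$ elements. Then either (i) $\mathsf{M}$ is connected and sparse paving, or (ii) $\mathsf{M}$ is disconnected and isomorphic to one of the following: $\mathsf{U}_{0,n-k-\ell}\oplus(\mathsf{U}_{1,2})^{\oplus\ell}\oplus\mathsf{U}_{k-\ell,k-\ell}$ for some $0\le k\le n$ and $0\le\ell\le\min\{k,n-k\}$; $\mathsf{U}_{0,n-\ell}\oplus\mathsf{U}_{1,\ell}$ for some $3\le\ell\le n-1$; or $\mathsf{U}_{\ell-1,\ell}\oplus\mathsf{U}_{n-\ell,n-\ell}$ for some $3\le\ell\le n-1$.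
   Context: $\mathsf{U}_{r,m}$ is the uniform matroid of rank $r$ on $m$ elements. A matroid is sparse paving if it has no minor isomorphic to $\mathsf{U}_{0,1}\oplus\mathsf{U}_{2,2}$ or $\mathsf{U}_{0,2}\oplus\mathsf{U}_{1,1}$. *)

theory Defs
  imports Main
begin

type_synonym 'a matroid = "'a set \<times> ('a set \<Rightarrow> bool)"

definition ground :: "'a matroid \<Rightarrow> 'a set" where
  "ground M = fst M"

definition indep :: "'a matroid \<Rightarrow> 'a set \<Rightarrow> bool" where
  "indep M = snd M"

definition matroid :: "'a matroid \<Rightarrow> bool" where
  "matroid M \<longleftrightarrow>
     finite (ground M) \<and>
     indep M {} \<and>
     (\<forall>I. indep M I \<longrightarrow> I \<subseteq> ground M) \<and>
     (\<forall>I J. indep M J \<and> I \<subseteq> J \<longrightarrow> indep M I) \<and>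
     (\<forall>I J. indep M I \<and> indep M J \<and> card I < card J \<longrightarrow>
        (\<exists>x \<in> J - I. indep M (insert x I)))"

definition rank :: "'a matroid \<Rightarrow> 'a set \<Rightarrow> nat" where
  "rank M X = Max (card ` {I. I \<subseteq> X \<and> indep M I})"

text \<open>The minor (M / C) \ D, where the remaining ground set is E' = E - C - D.\<close>
definition minor_of :: "'a matroid \<Rightarrow> 'a set \<Rightarrow> 'a set \<Rightarrow> 'a matroid" where
  "minor_of M C E' = (E', \<lambda>I. I \<subseteq> E' \<and> rank M (I \<union> C) = card I + rank M C)"

definition is_minor :: "'a matroid \<Rightarrow> 'a matroid \<Rightarrow> bool" where
  "is_minor N M \<longleftrightarrow> (\<exists>C E'. C \<subseteq> ground M \<and> E' \<subseteq> ground M - C \<and> N = minor_of M C E')"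

definition iso :: "'a matroid \<Rightarrow> 'b matroid \<Rightarrow> bool" where
  "iso M N \<longleftrightarrow> (\<exists>f. bij_betw f (ground M) (ground N) \<and>
      (\<forall>I \<subseteq> ground M. indep M I \<longleftrightarrow> indep N (f ` I)))"

definition has_minor_iso :: "'a matroid \<Rightarrow> 'b matroid \<Rightarrow> bool" where
  "has_minor_iso M N \<longleftrightarrow> (\<exists>M'. is_minor M' M \<and> iso M' N)"

definition U :: "nat \<Rightarrow> nat \<Rightarrow> nat matroid" where
  "U r m = ({0..<m}, \<lambda>I. I \<subseteq> {0..<m} \<and> card I \<le> r)"

definition dsum :: "'a matroid list \<Rightarrow> (nat \<times> 'a) matroid" where
  "dsum Ms = ((\<Union>i<length Ms. {i} \<times> ground (Ms ! i)),
     \<lambda>I. I \<subseteq> (\<Union>i<length Ms. {i} \<times> ground (Ms ! i)) \<and>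
         (\<forall>i<length Ms. indep (Ms ! i) {x. (i, x) \<in> I}))"

definition circuit :: "'a matroid \<Rightarrow> 'a set \<Rightarrow> bool" where
  "circuit M C \<longleftrightarrow> C \<subseteq> ground M \<and> \<not> indep M C \<and> (\<forall>D. D \<subset> C \<longrightarrow> indep M D)"

definition connected :: "'a matroid \<Rightarrow> bool" where
  "connected M \<longleftrightarrow> (\<forall>x \<in> ground M. \<forall>y \<in> ground M. x \<noteq> y \<longrightarrow>
      (\<exists>C. circuit M C \<and> x \<in> C \<and> y \<in> C))"

definition sparse_paving :: "'a matroid \<Rightarrow> bool" where
  "sparse_paving M \<longleftrightarrow> \<not> has_minor_iso M (dsum [U 0 1, U 2 2]) \<and>
                        \<not> has_minor_iso M (dsum [U 0 2, U 1 1])"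

end

theory Submission
  imports Defs
begin

text \<open>The two excluded minors are dual: \<open>U\<^sub>0\<^sub>,\<^sub>1 \<oplus> U\<^sub>2\<^sub>,\<^sub>3\<close> is a loop beside a triangle,
  \<open>U\<^sub>1\<^sub>,\<^sub>1 \<oplus> U\<^sub>1\<^sub>,\<^sub>3\<close> a coloop beside three parallel elements. Excluding the first, a
  contraction \<open>M / Z\<close> with a loop has no other circuit of size at least 3; excluding the second,
  distinct circuits of a restriction that has a coloop are disjoint.

  If \<open>M\<close> is connected but not sparse paving, there is an independent \<open>C\<close> such that \<open>M / C\<close> has
  rank 2 and a loop, or rank 1 and two loops. Then the circuits avoiding a suitable element are
  pairwise disjoint; on the other hand connectivity provides a circuit through a loop, which
  becomes a circuit of size at most 2 after contracting the rest of the loop's circuit, and this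
  small circuit lifts to a circuit overlapping another one.

  If \<open>M\<close> is disconnected, a circuit of size at least 3 is the only circuit, which gives
  \<open>U\<^sub>l\<^sub>-\<^sub>1\<^sub>,\<^sub>l \<oplus> U\<^sub>n\<^sub>-\<^sub>l\<^sub>,\<^sub>n\<^sub>-\<^sub>l\<close>. Otherwise all circuits have at most two elements, so \<open>M\<close> is
  determined by its loops and parallel classes, and a parallel class of size 3 forces all
  non-loops to be parallel.\<close>


lemma card_Int_le_card_minus_1_iff:
  assumes "finite D" "D \<noteq> {}"
  shows "card (I \<inter> D) \<le> card D - 1 \<longleftrightarrow> \<not> D \<subseteq> I"
proof
  assume "\<not> D \<subseteq> I"
  then have "card (I \<inter> D) < card D"
    using assms(1) by (intro psubset_card_mono) auto
  then show "card (I \<inter> D) \<le> card D - 1"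
    by linarith
next
  assume le: "card (I \<inter> D) \<le> card D - 1"
  have "card D > 0"
    using assms by (simp add: card_gt_0_iff)
  then show "\<not> D \<subseteq> I"
    using le by (auto simp: Int_absorb1)
qed

lemma card_le_2_eq_pair:
  assumes "finite D" "card D \<le> 2" "a \<in> D" "b \<in> D" "a \<noteq> b"
  shows "D = {a, b}"
proof -
  have "{a, b} \<subseteq> D" "card {a, b} = 2"
    using assms by auto
  then show ?thesis
    using card_seteq[OF assms(1), of "{a, b}"] assms(2) by simp
qed

lemma sorted_wrt_if_pairwise: "distinct xs \<Longrightarrow> pairwise R (set xs) \<Longrightarrow> sorted_wrt R xs"
  by (induction xs) (auto simp: pairwise_insert)

lemma sorted_wrt_disjoint_nth:
  assumes "sorted_wrt (\<lambda>(_, A) (_, B). A \<inter> B = {}) bs" "i < length bs" "j < length bs" "i \<noteq> j"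
  shows "snd (bs ! i) \<inter> snd (bs ! j) = {}"
proof (cases "i < j")
  case True
  then show ?thesis
    using sorted_wrt_nth_less[OF assms(1) True assms(3)] by (simp add: case_prod_beta)
next
  case False
  then have "j < i"
    using assms(4) by simp
  then show ?thesis
    using sorted_wrt_nth_less[OF assms(1) _ assms(2), of j] by (auto simp: case_prod_beta)
qed

lemma UN_snd_nth: "(\<Union>i<length bs. snd (bs ! i)) = (\<Union>(_, B)\<in>set bs. B)"
proof (intro equalityI subsetI)
  fix w assume "w \<in> (\<Union>i<length bs. snd (bs ! i))"
  then obtain i where "i < length bs" "w \<in> snd (bs ! i)"
    by blast
  then show "w \<in> (\<Union>(_, B)\<in>set bs. B)"
    by (metis (no_types, lifting) UN_iff nth_mem prod.collapse split_conv)
next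
  fix w assume "w \<in> (\<Union>(_, B)\<in>set bs. B)"
  then obtain k B where kB: "(k, B) \<in> set bs" "w \<in> B"
    by blast
  then obtain i where "i < length bs" "bs ! i = (k, B)"
    by (auto simp: in_set_conv_nth)
  then show "w \<in> (\<Union>i<length bs. snd (bs ! i))"
    using kB(2) by (metis UN_iff lessThan_iff snd_conv)
qed

lemma card_preimage_bij_betw:
  assumes "bij_betw h A B"
  shows "card {x \<in> A. h x \<in> I} = card (I \<inter> B)"
proof -
  have "h ` {x \<in> A. h x \<in> I} = I \<inter> B"
    using assms unfolding bij_betw_def by auto
  moreover have "inj_on h {x \<in> A. h x \<in> I}"
    using assms unfolding bij_betw_def by (rule inj_on_subset[OF conjunct1]) blast
  ultimately show ?thesis
    using card_image by fastforce
qed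

section \<open>Rank and circuits\<close>

locale wf_matroid =
  fixes M :: "'a matroid"
  assumes wf: "matroid M"
begin

abbreviation "E \<equiv> ground M"
abbreviation "ind \<equiv> indep M"
abbreviation "r \<equiv> rank M"
abbreviation "circ \<equiv> circuit M"

lemma finite_ground: "finite E"
  using wf unfolding matroid_def by blast

lemma indep_empty: "ind {}"
  using wf unfolding matroid_def by blast

lemma indep_subset_ground: "ind I \<Longrightarrow> I \<subseteq> E"
  using wf unfolding matroid_def by blast

lemma indep_subset: "ind J \<Longrightarrow> I \<subseteq> J \<Longrightarrow> ind I"
  using wf unfolding matroid_def by blast

lemma indep_augment: "ind I \<Longrightarrow> ind J \<Longrightarrow> card I < card J \<Longrightarrow> \<exists>x\<in>J - I. ind (insert x I)"
  using wf unfolding matroid_def by blast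

lemma finite_indep: "ind I \<Longrightarrow> finite I"
  using indep_subset_ground finite_ground finite_subset by blast

lemma finite_indep_cards: "finite (card ` {I. I \<subseteq> X \<and> ind I})"
proof -
  have "{I. I \<subseteq> X \<and> ind I} \<subseteq> Pow E"
    using indep_subset_ground by blast
  then show ?thesis
    using finite_ground by (meson finite_Pow_iff finite_subset finite_imageI)
qed

lemma rank_attained: "\<exists>I. I \<subseteq> X \<and> ind I \<and> card I = r X"
proof -
  have "card ` {I. I \<subseteq> X \<and> ind I} \<noteq> {}"
    using indep_empty by blast
  then have "r X \<in> card ` {I. I \<subseteq> X \<and> ind I}"
    unfolding rank_def using Max_in finite_indep_cards by blast
  then show ?thesis by auto
qed

lemma card_le_rank: "I \<subseteq> X \<Longrightarrow> ind I \<Longrightarrow> card I \<le> r X"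
  unfolding rank_def using finite_indep_cards by (intro Max_ge) auto

lemma indep_extend_basis:
  assumes "J \<subseteq> X" "ind J"
  obtains I where "J \<subseteq> I" "I \<subseteq> X" "ind I" "card I = r X"
proof -
  let ?P = "\<lambda>I. J \<subseteq> I \<and> I \<subseteq> X \<and> ind I"
  obtain I where I: "?P I" and Imax: "\<And>I'. ?P I' \<Longrightarrow> card E - card I \<le> card E - card I'"
    using ex_has_least_nat[of ?P J "\<lambda>I. card E - card I"] assms by blast
  have "\<not> card I < r X"
  proof
    assume lt: "card I < r X"
    obtain I0 where I0: "I0 \<subseteq> X" "ind I0" "card I0 = r X"
      using rank_attained by blast
    then obtain x where x: "x \<in> I0 - I" "ind (insert x I)"
      using indep_augment[of I I0] I lt by auto
    have "card (insert x I) = card I + 1"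
      using x finite_indep I by auto
    moreover have "card (insert x I) \<le> card E"
      using indep_subset_ground[OF x(2)] finite_ground card_mono by blast
    moreover have "?P (insert x I)"
      using x I I0 by auto
    ultimately show False
      using Imax[of "insert x I"] by linarith
  qed
  then show thesis
    using I card_le_rank that by (meson le_antisym not_less)
qed

lemma rank_indep: "ind I \<Longrightarrow> r I = card I"
  by (metis card_le_rank card_mono finite_indep le_antisym order_refl rank_attained)

lemma rank_le_card: "finite X \<Longrightarrow> r X \<le> card X"
  using rank_attained card_mono by metis

lemma rank_empty: "r {} = 0"
  using rank_le_card[of "{}"] by simp

lemma rank_mono: "X \<subseteq> Y \<Longrightarrow> r X \<le> r Y"
  using rank_attained card_le_rank by (metis order_trans)

lemma indep_iff_rank: "I \<subseteq> E \<Longrightarrow> ind I \<longleftrightarrow> r I = card I"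
  by (metis card_subset_eq finite_ground finite_subset rank_attained rank_indep)

lemma rank_submodular: "r (A \<union> B) + r (A \<inter> B) \<le> r A + r B"
proof -
  obtain I where I: "I \<subseteq> A \<inter> B" "ind I" "card I = r (A \<inter> B)"
    using rank_attained by blast
  obtain J where J: "I \<subseteq> J" "J \<subseteq> A \<union> B" "ind J" "card J = r (A \<union> B)"
    using indep_extend_basis[of I "A \<union> B"] I by auto
  have fJ: "finite J"
    using J finite_indep by blast
  have "card (J \<inter> A) \<le> r A" "card (J \<inter> B) \<le> r B"
    using J indep_subset card_le_rank by (meson inf_le1 inf_le2)+
  moreover have "card I \<le> card (J \<inter> A \<inter> B)"
    using I J fJ by (intro card_mono) auto
  moreover have "card (J \<inter> A) + card (J \<inter> B) = card J + card (J \<inter> A \<inter> B)"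
    using card_Un_Int[of "J \<inter> A" "J \<inter> B"] fJ J(2)
    by (simp add: Int_Un_distrib[symmetric] Int_absorb2 inf_assoc inf_left_commute)
  ultimately show ?thesis
    using I J by linarith
qed

lemma rank_insert_le: "r (insert y S) \<le> r S + 1"
proof -
  obtain I where I: "I \<subseteq> insert y S" "ind I" "card I = r (insert y S)"
    using rank_attained by blast
  have "I - {y} \<subseteq> S" "ind (I - {y})"
    using I indep_subset by auto
  then have "card (I - {y}) \<le> r S"
    by (rule card_le_rank)
  moreover have "card I \<le> card (I - {y}) + 1"
    using finite_indep[OF I(2)] by (cases "y \<in> I") (auto simp: card_Diff_singleton_if)
  ultimately show ?thesis
    using I by linarith
qed

lemma rank_insert_cases: "r (insert x C) = r C \<or> r (insert x C) = r C + 1"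
proof -
  have "r C \<le> r (insert x C)"
    by (rule rank_mono) auto
  then show ?thesis
    using rank_insert_le[of x C] by linarith
qed

lemma rank_insert_notin: "r (insert s X) = r X + 1 \<Longrightarrow> s \<notin> X"
  by (auto simp: insert_absorb)

lemma rank_insert_eq_mono:
  assumes "r (insert y S) = r S" "S \<subseteq> T"
  shows "r (insert y T) = r T"
proof -
  have "r (insert y T) + r (insert y S \<inter> T) \<le> r (insert y S) + r T"
    using rank_submodular[of "insert y S" T] assms(2) by (simp add: insert_absorb2 sup.absorb2)
  moreover have "r S \<le> r (insert y S \<inter> T)"
    using assms by (intro rank_mono) auto
  moreover have "r T \<le> r (insert y T)"
    by (rule rank_mono) auto
  ultimately show ?thesis
    using assms(1) by linarith
qed

lemma rank_insert_notin_mono: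
  assumes "r (insert q C) = r C + 1" "Z \<subseteq> C"
  shows "r (insert q Z) = r Z + 1"
  using rank_insert_eq_mono[OF _ assms(2), of q] rank_insert_cases[of q Z] assms(1) by auto

lemma rank_Un_spanned:
  assumes "finite T" "\<forall>t\<in>T. r (insert t S) = r S"
  shows "r (S \<union> T) = r S"
  using assms
proof (induction T rule: finite_induct)
  case (insert t T)
  then have "r (insert t (S \<union> T)) = r (S \<union> T)"
    using rank_insert_eq_mono[of t S "S \<union> T"] by auto
  then show ?case
    using insert by simp
qed simp

lemma rank_increase_exists:
  assumes "W \<subseteq> E" "r S < r W"
  obtains y where "y \<in> W" "r (insert y S) = r S + 1"
proof -
  have "r W \<le> r (S \<union> W)"
    by (rule rank_mono) auto
  then have "\<not> (\<forall>y\<in>W. r (insert y S) = r S)"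
    using rank_Un_spanned[of W S] assms finite_ground finite_subset by fastforce
  then show thesis
    using rank_insert_cases that by blast
qed

lemma rank_Un_basis:
  assumes "B \<subseteq> C" "ind B" "card B = r C" "C \<subseteq> E"
  shows "r (S \<union> B) = r (S \<union> C)"
proof -
  have "\<forall>c\<in>C. r (insert c (S \<union> B)) = r (S \<union> B)"
  proof
    fix c assume c: "c \<in> C"
    have "r B \<le> r (insert c B)" "r (insert c B) \<le> r C"
      using c assms(1) by (auto intro: rank_mono)
    then have "r (insert c B) = r B"
      using assms rank_indep by simp
    then show "r (insert c (S \<union> B)) = r (S \<union> B)"
      by (rule rank_insert_eq_mono) auto
  qed
  then have "r ((S \<union> B) \<union> C) = r (S \<union> B)"
    using assms(4) finite_ground finite_subset rank_Un_spanned by blast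
  moreover have "r (S \<union> C) \<le> r ((S \<union> B) \<union> C)" "r (S \<union> B) \<le> r (S \<union> C)"
    using assms(1) by (auto intro: rank_mono)
  ultimately show ?thesis
    by linarith
qed

lemma indep_insert_rank:
  assumes "ind Z" "y \<in> E" "y \<notin> Z" "r (insert y Z) = r Z + 1"
  shows "ind (insert y Z)"
  using assms indep_iff_rank[of "insert y Z"] rank_indep[of Z] finite_indep[of Z]
    indep_subset_ground[of Z] by simp

lemma indep_Un_of_rank:
  assumes "ind C" "F \<subseteq> E" "r (F \<union> C) = card F + r C"
  shows "ind (F \<union> C)"
proof -
  have fin: "finite F" "finite C"
    using assms(1,2) finite_ground finite_indep finite_subset by blast+
  have "r (F \<union> C) \<le> card (F \<union> C)"
    using fin by (simp add: rank_le_card)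
  moreover have "card (F \<union> C) \<le> card F + card C"
    by (rule card_Un_le)
  ultimately have "r (F \<union> C) = card (F \<union> C)"
    using assms(3) rank_indep[OF assms(1)] by linarith
  moreover have "F \<union> C \<subseteq> E"
    using assms(1,2) indep_subset_ground by blast
  ultimately show ?thesis
    using indep_iff_rank by blast
qed

lemma indep_pair_of_rank:
  assumes C: "ind C" and uv: "u \<in> E" "v \<in> E" "r (insert u (insert v C)) = r C + 2"
  shows "ind ({u, v} \<union> C)" "card {u, v} = 2"
proof -
  have "u \<noteq> v"
    using uv(3) rank_insert_le[of v C] by auto
  then show "card {u, v} = 2"
    by simp
  then show "ind ({u, v} \<union> C)"
    using uv by (intro indep_Un_of_rank[OF C]) (auto simp: insert_commute)
qed

lemma rank_Un_indep:
  assumes "ind Z" "I \<subseteq> E" "I \<inter> Z = {}"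
  shows "r (I \<union> Z) = card I + r Z \<longleftrightarrow> ind (I \<union> Z)"
proof -
  have "card (I \<union> Z) = card I + card Z"
    using assms finite_ground finite_subset finite_indep by (metis card_Un_disjoint)
  then show ?thesis
    using assms indep_iff_rank[of "I \<union> Z"] rank_indep indep_subset_ground by auto
qed

lemma circuit_subset_ground: "circ K \<Longrightarrow> K \<subseteq> E"
  unfolding circuit_def by blast

lemma circuit_dep: "circ K \<Longrightarrow> \<not> ind K"
  unfolding circuit_def by blast

lemma circuit_psubset_indep: "circ K \<Longrightarrow> D \<subset> K \<Longrightarrow> ind D"
  unfolding circuit_def by blast

lemma finite_circuit: "circ K \<Longrightarrow> finite K"
  using circuit_subset_ground finite_ground finite_subset by blast

lemma circuit_nonempty: "circ K \<Longrightarrow> K \<noteq> {}"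
  using circuit_dep indep_empty by blast

lemma circuit_remove_indep: "circ K \<Longrightarrow> e \<in> K \<Longrightarrow> ind (K - {e})"
  using circuit_psubset_indep by blast

lemma circuit_incomparable: "circ K1 \<Longrightarrow> circ K2 \<Longrightarrow> K1 \<subseteq> K2 \<Longrightarrow> K1 = K2"
  using circuit_psubset_indep circuit_dep by blast

lemma circuit_rank:
  assumes "circ K" "e \<in> K"
  shows "r K = r (K - {e})"
proof -
  have "r (K - {e}) = card K - 1"
    using assms circuit_remove_indep rank_indep finite_circuit by (simp add: card_Diff_singleton)
  moreover have "r K < card K"
    using assms circuit_subset_ground circuit_dep indep_iff_rank rank_le_card finite_circuit
    by (metis le_neq_implies_less)
  moreover have "r (K - {e}) \<le> r K"
    by (rule rank_mono) auto
  ultimately show ?thesis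
    by linarith
qed

lemma circuit_spans:
  assumes "circ K" "e \<in> K" "K - {e} \<subseteq> S"
  shows "r (insert e S) = r S"
proof -
  have "insert e (K - {e}) = K"
    using assms(2) by blast
  then have "r (insert e (K - {e})) = r (K - {e})"
    using circuit_rank[OF assms(1,2)] by simp
  then show ?thesis
    using rank_insert_eq_mono assms(3) by blast
qed

lemma circuit_spans_closure:
  assumes "circ K" "d \<in> K" "K - {d} \<subseteq> insert y C" "r (insert y C) = r C"
  shows "r (insert d C) = r C"
proof -
  have "r (insert d (insert y C)) = r (insert y C)"
    by (rule circuit_spans[OF assms(1-3)])
  moreover have "r C \<le> r (insert d C)" "r (insert d C) \<le> r (insert d (insert y C))"
    by (auto intro: rank_mono)
  ultimately show ?thesis
    using assms(4) by linarith
qed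

lemma circuit_remove_rank:
  assumes "circ K" "y \<in> K" "K \<subseteq> T"
  shows "r (T - {y}) = r T"
proof -
  have "r (insert y (T - {y})) = r (T - {y})"
    using assms by (intro circuit_spans) auto
  moreover have "insert y (T - {y}) = T"
    using assms(2,3) by blast
  ultimately show ?thesis
    by simp
qed

lemma dep_contains_circuit:
  assumes "X \<subseteq> E" "\<not> ind X"
  obtains K where "K \<subseteq> X" "circ K"
proof -
  let ?P = "\<lambda>D. D \<subseteq> X \<and> \<not> ind D"
  obtain D where D: "?P D" and Dmin: "\<And>D'. ?P D' \<Longrightarrow> card D \<le> card D'"
    using ex_has_least_nat[of ?P X card] assms by blast
  have "D \<subseteq> E"
    using D assms(1) by blast
  then have fD: "finite D"
    using finite_ground by (rule finite_subset)
  have "circ D"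
    unfolding circuit_def
  proof (intro conjI allI impI)
    fix D' assume D': "D' \<subset> D"
    show "ind D'"
    proof (rule ccontr)
      assume "\<not> ind D'"
      then have "card D \<le> card D'"
        using D D' Dmin by blast
      then show False
        using psubset_card_mono[OF fD D'] by linarith
    qed
  qed (use D \<open>D \<subseteq> E\<close> in auto)
  then show thesis
    using D that by blast
qed

lemma indep_iff_no_circuit: "X \<subseteq> E \<Longrightarrow> ind X \<longleftrightarrow> (\<forall>K. circ K \<longrightarrow> \<not> K \<subseteq> X)"
  using indep_subset circuit_dep dep_contains_circuit by metis

lemma spanned_circuit:
  assumes "S \<subseteq> E" "y \<in> E" "y \<notin> S" "r (insert y S) = r S"
  obtains K where "circ K" "y \<in> K" "K \<subseteq> insert y S"
proof -
  obtain I where I: "I \<subseteq> S" "ind I" "card I = r S"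
    using rank_attained by blast
  have "y \<notin> I"
    using I assms(3) by blast
  then have "card (insert y I) = r S + 1"
    using I finite_indep by simp
  moreover have "r (insert y I) \<le> r (insert y S)"
    using I by (intro rank_mono) auto
  ultimately have "\<not> ind (insert y I)"
    using assms(4) rank_indep by fastforce
  moreover have "insert y I \<subseteq> E"
    using I assms by blast
  ultimately obtain K where K: "K \<subseteq> insert y I" "circ K"
    using dep_contains_circuit by blast
  then have "y \<in> K"
    using I indep_subset circuit_dep by (metis subset_insert)
  then show thesis
    using K I that by blast
qed

lemma strong_circuit_elim:
  assumes "circ K1" "circ K2" "e \<in> K1" "e \<in> K2" "f \<in> K1" "f \<notin> K2"
  obtains K3 where "circ K3" "f \<in> K3" "K3 \<subseteq> (K1 \<union> K2) - {e}"
proof -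
  define S where "S = (K1 \<union> K2) - {e, f}"
  have "r (insert e S) = r S"
    using assms(6) by (intro circuit_spans[OF assms(2,4)]) (auto simp: S_def)
  moreover have "r (insert f (insert e S)) = r (insert e S)"
    by (intro circuit_spans[OF assms(1,5)]) (auto simp: S_def)
  moreover have "r S \<le> r (insert f S)" "r (insert f S) \<le> r (insert f (insert e S))"
    by (auto intro: rank_mono)
  ultimately have "r (insert f S) = r S"
    by linarith
  moreover have "S \<subseteq> E" "f \<in> E"
    using assms(1,2,5) circuit_subset_ground unfolding S_def by blast+
  ultimately obtain K where "circ K" "f \<in> K" "K \<subseteq> insert f S"
    using spanned_circuit[of S f] unfolding S_def by blast
  moreover have "insert f S \<subseteq> (K1 \<union> K2) - {e}"
    using assms unfolding S_def by blast
  ultimately show thesis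
    using that by blast
qed

lemma circuit_pair_spanning_triple:
  assumes K: "circ K1" "circ K2" and abe: "a \<in> K1 - K2" "b \<in> K2 - K1" "e \<in> K1 \<inter> K2"
    and t: "t \<in> {a, b, e}"
  shows "r (insert t (K1 \<union> K2 - {a, b, e})) = r (K1 \<union> K2)"
proof -
  define X where "X = K1 \<union> K2"
  have rXa: "r (X - {a}) = r X"
    using abe by (intro circuit_remove_rank[OF K(1)]) (auto simp: X_def)
  have rXb: "r (X - {b}) = r X"
    using abe by (intro circuit_remove_rank[OF K(2)]) (auto simp: X_def)
  consider "t = a" | "t = b" | "t = e"
    using t by blast
  then show ?thesis
  proof cases
    case 1
    have "r (X - {b} - {e}) = r (X - {b})"
      by (rule circuit_remove_rank[OF K(1)]) (use abe in \<open>auto simp: X_def\<close>)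
    moreover have "insert t (X - {a, b, e}) = X - {b} - {e}"
      using 1 abe unfolding X_def by auto
    ultimately show ?thesis
      using rXb unfolding X_def by simp
  next
    case 2
    have "r (X - {a} - {e}) = r (X - {a})"
      by (rule circuit_remove_rank[OF K(2)]) (use abe in \<open>auto simp: X_def\<close>)
    moreover have "insert t (X - {a, b, e}) = X - {a} - {e}"
      using 2 abe unfolding X_def by auto
    ultimately show ?thesis
      using rXa unfolding X_def by simp
  next
    case 3
    have "r (X - {a} - {b}) = r (X - {a})"
      by (rule circuit_remove_rank[OF K(2)]) (use abe in \<open>auto simp: X_def\<close>)
    moreover have "insert t (X - {a, b, e}) = X - {a} - {b}"
      using 3 abe unfolding X_def by auto
    ultimately show ?thesis
      using rXa unfolding X_def by simp
  qed
qed

lemma coloop_rank_insert: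
  assumes "z \<in> W" "r (W - {z}) < r W" "S \<subseteq> W - {z}"
  shows "r (insert z S) = r S + 1"
proof (rule ccontr)
  assume "r (insert z S) \<noteq> r S + 1"
  then have "r (insert z S) = r S"
    using rank_insert_cases by blast
  then have "r (insert z (W - {z})) = r (W - {z})"
    using assms(3) by (rule rank_insert_eq_mono)
  then show False
    using assms(1,2) by (simp add: insert_absorb)
qed

lemma coloop_notin_circuit:
  assumes "r (W - {z}) < r W" "circ K" "K \<subseteq> W"
  shows "z \<notin> K"
  using circuit_remove_rank[OF assms(2) _ assms(3), of z] assms(1) by auto

definition circuit_linked :: "'a \<Rightarrow> 'a \<Rightarrow> bool" where
  "circuit_linked x y \<longleftrightarrow> x = y \<or> (\<exists>K. circ K \<and> x \<in> K \<and> y \<in> K)"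

lemma circuit_linked_sym: "circuit_linked x y \<Longrightarrow> circuit_linked y x"
  unfolding circuit_linked_def by blast

lemma circuits_meeting_linked:
  assumes "circ K1" "circ K2" "x \<in> K1" "z \<in> K2" "K1 \<inter> K2 \<noteq> {}"
  shows "\<exists>K. circ K \<and> x \<in> K \<and> z \<in> K"
  using assms
proof (induction "card (K1 \<union> K2)" arbitrary: K1 K2 rule: less_induct)
  case less
  show ?case
  proof (cases "z \<in> K1 \<or> x \<in> K2")
    case False
    obtain e where e: "e \<in> K1" "e \<in> K2"
      using less by blast
    obtain K3 where K3: "circ K3" "x \<in> K3" "K3 \<subseteq> (K1 \<union> K2) - {e}"
      using strong_circuit_elim[of K1 K2 e x] less e False by blast
    show ?thesis
    proof (cases "z \<in> K3")
      case zK3: False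
      obtain w where w: "w \<in> K3" "w \<notin> K1"
        using circuit_incomparable[of K3 K1] K3 less e by blast
      then have wK2: "w \<in> K2"
        using K3 by blast
      obtain K4 where K4: "circ K4" "z \<in> K4" "K4 \<subseteq> (K2 \<union> K3) - {w}"
        using strong_circuit_elim[of K2 K3 w z] less w wK2 zK3 K3 by blast
      show ?thesis
      proof (cases "x \<in> K4")
        case False
        have "K1 \<inter> K4 \<noteq> {}"
        proof
          assume "K1 \<inter> K4 = {}"
          then have "K4 \<subseteq> K2"
            using K4 K3 by blast
          then show False
            using circuit_incomparable K4 less wK2 by blast
        qed
        moreover have "K1 \<union> K4 \<subset> K1 \<union> K2"
          using K4 K3 w wK2 by blast
        then have "card (K1 \<union> K4) < card (K1 \<union> K2)"
          using less finite_circuit by (meson finite_UnI psubset_card_mono)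
        ultimately show ?thesis
          using less K4 by blast
      qed (use K4 in blast)
    qed (use K3 in blast)
  qed (use less in blast)
qed

lemma circuit_linked_trans: "circuit_linked x y \<Longrightarrow> circuit_linked y z \<Longrightarrow> circuit_linked x z"
  unfolding circuit_linked_def using circuits_meeting_linked by blast

end

section \<open>Direct sums of uniform matroids\<close>

lemma ground_dsum: "ground (dsum Ms) = (\<Union>i<length Ms. {i} \<times> ground (Ms ! i))"
  unfolding dsum_def ground_def by simp

lemma indep_dsum:
  "indep (dsum Ms) I \<longleftrightarrow> I \<subseteq> ground (dsum Ms) \<and> (\<forall>i<length Ms. indep (Ms ! i) {x. (i, x) \<in> I})"
  unfolding dsum_def ground_def indep_def by simp

lemma ground_U: "ground (U k m) = {0..<m}"
  unfolding U_def ground_def by simp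

lemma indep_U: "indep (U k m) X \<longleftrightarrow> X \<subseteq> {0..<m} \<and> card X \<le> k"
  unfolding U_def indep_def by simp

lemma ground_minor: "ground (minor_of M C E') = E'"
  unfolding minor_of_def ground_def by simp

lemma indep_minor: "indep (minor_of M C E') I \<longleftrightarrow> I \<subseteq> E' \<and> rank M (I \<union> C) = card I + rank M C"
  unfolding minor_of_def indep_def by simp

lemma bij_betw_dsum_ground:
  assumes bij: "\<And>i. i < length Ms \<Longrightarrow> bij_betw (h i) (ground (Ms ! i)) (B i)"
    and disj: "\<And>i j. i < length Ms \<Longrightarrow> j < length Ms \<Longrightarrow> i \<noteq> j \<Longrightarrow> B i \<inter> B j = {}"
  shows "bij_betw (\<lambda>(i, x). h i x) (ground (dsum Ms)) (\<Union>i<length Ms. B i)"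
  unfolding bij_betw_def
proof
  show "inj_on (\<lambda>(i, x). h i x) (ground (dsum Ms))"
  proof (rule inj_onI)
    fix u v
    assume u: "u \<in> ground (dsum Ms)" and v: "v \<in> ground (dsum Ms)"
      and huv: "(\<lambda>(i, x). h i x) u = (\<lambda>(i, x). h i x) v"
    obtain i x where i: "u = (i, x)" "i < length Ms" "x \<in> ground (Ms ! i)"
      using u by (auto simp: ground_dsum)
    obtain j y where j: "v = (j, y)" "j < length Ms" "y \<in> ground (Ms ! j)"
      using v by (auto simp: ground_dsum)
    have hxy: "h i x = h j y"
      using huv i(1) j(1) by simp
    have "h i x \<in> B i" "h j y \<in> B j"
      by (rule bij_betw_apply[OF bij[OF i(2)] i(3)], rule bij_betw_apply[OF bij[OF j(2)] j(3)])
    then have "i = j"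
      using disj[OF i(2) j(2)] hxy by (metis disjoint_iff)
    moreover have "inj_on (h i) (ground (Ms ! i))"
      using bij[OF i(2)] by (rule bij_betw_imp_inj_on)
    ultimately show "u = v"
      using i j hxy by (simp add: inj_on_eq_iff)
  qed
  show "(\<lambda>(i, x). h i x) ` ground (dsum Ms) = (\<Union>i<length Ms. B i)"
  proof (intro equalityI subsetI)
    fix w assume "w \<in> (\<lambda>(i, x). h i x) ` ground (dsum Ms)"
    then obtain i x where i: "i < length Ms" "x \<in> ground (Ms ! i)" "w = h i x"
      by (auto simp: ground_dsum)
    then show "w \<in> (\<Union>i<length Ms. B i)"
      using bij_betw_apply[OF bij[OF i(1)] i(2)] by blast
  next
    fix w assume "w \<in> (\<Union>i<length Ms. B i)"
    then obtain i where i: "i < length Ms" "w \<in> B i"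
      by blast
    then obtain x where "x \<in> ground (Ms ! i)" "w = h i x"
      using bij[OF i(1)] unfolding bij_betw_def by blast
    then show "w \<in> (\<lambda>(i, x). h i x) ` ground (dsum Ms)"
      using i(1) unfolding ground_dsum by (auto intro!: image_eqI[where x = "(i, x)"])
  qed
qed

lemma iso_dsumI:
  fixes N :: "'b matroid" and Ms :: "'c matroid list"
  assumes bij: "\<And>i. i < length Ms \<Longrightarrow> bij_betw (h i) (ground (Ms ! i)) (B i)"
    and disj: "\<And>i j. i < length Ms \<Longrightarrow> j < length Ms \<Longrightarrow> i \<noteq> j \<Longrightarrow> B i \<inter> B j = {}"
    and cover: "(\<Union>i<length Ms. B i) = ground N"
    and ind: "\<And>I. I \<subseteq> ground N \<Longrightarrow>
      indep N I \<longleftrightarrow> (\<forall>i<length Ms. indep (Ms ! i) {x \<in> ground (Ms ! i). h i x \<in> I})"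
  shows "iso N (dsum Ms)"
proof -
  define H where "H = (\<lambda>(i, x). h i x)"
  define G where "G = ground (dsum Ms)"
  have bijH: "bij_betw H G (ground N)"
    using bij_betw_dsum_ground[OF bij disj] cover unfolding H_def G_def by simp
  define f where "f = inv_into G H"
  have bijf: "bij_betw f (ground N) G"
    unfolding f_def using bijH by (rule bij_betw_inv_into)
  show ?thesis
    unfolding iso_def
  proof (intro exI conjI allI impI)
    show "bij_betw f (ground N) (ground (dsum Ms))"
      using bijf G_def by simp
    fix I assume IN: "I \<subseteq> ground N"
    have fIG: "f ` I \<subseteq> G"
      using bijf IN bij_betw_imp_surj_on by blast
    have "{x. (i, x) \<in> f ` I} = {x \<in> ground (Ms ! i). h i x \<in> I}" if i: "i < length Ms" for i
    proof (intro equalityI subsetI)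
      fix x assume "x \<in> {x. (i, x) \<in> f ` I}"
      then obtain w where w: "w \<in> I" "(i, x) = f w"
        by blast
      then have "H (i, x) = w"
        using IN bijH unfolding f_def by (simp add: bij_betw_inv_into_right subset_iff)
      moreover have "(i, x) \<in> G"
        using w fIG by blast
      ultimately show "x \<in> {x \<in> ground (Ms ! i). h i x \<in> I}"
        using w unfolding G_def H_def ground_dsum by auto
    next
      fix x assume x: "x \<in> {x \<in> ground (Ms ! i). h i x \<in> I}"
      then have "(i, x) \<in> G"
        using i unfolding G_def ground_dsum by blast
      then have "f (H (i, x)) = (i, x)"
        unfolding f_def using bijH by (simp add: bij_betw_inv_into_left)
      then show "x \<in> {x. (i, x) \<in> f ` I}"
        using x unfolding H_def by (metis (no_types, lifting) case_prod_conv image_eqI mem_Collect_eq)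
    qed
    then have "indep (dsum Ms) (f ` I) \<longleftrightarrow>
        (\<forall>i<length Ms. indep (Ms ! i) {x \<in> ground (Ms ! i). h i x \<in> I})"
      using fIG unfolding G_def by (simp add: indep_dsum)
    then show "indep N I \<longleftrightarrow> indep (dsum Ms) (f ` I)"
      using ind[OF IN] by simp
  qed
qed

text \<open>The blocks are given as pairs (capacity, block); \<open>sorted_wrt\<close> makes them pairwise
  disjoint.\<close>
lemma iso_dsum_uniformI:
  fixes N :: "'b matroid" and bs :: "(nat \<times> 'b set) list"
  assumes fin: "\<And>k B. (k, B) \<in> set bs \<Longrightarrow> finite B"
    and disj: "sorted_wrt (\<lambda>(_, A) (_, B). A \<inter> B = {}) bs"
    and cover: "(\<Union>(_, B)\<in>set bs. B) = ground N"
    and ind: "\<And>I. I \<subseteq> ground N \<Longrightarrow> indep N I \<longleftrightarrow> (\<forall>(k, B)\<in>set bs. card (I \<inter> B) \<le> k)"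
  shows "iso N (dsum (map (\<lambda>(k, B). U k (card B)) bs))"
proof -
  define Ms where "Ms = map (\<lambda>(k, B). U k (card B)) bs"
  define blk where "blk i = snd (bs ! i)" for i
  have Ms_nth: "Ms ! i = U (fst (bs ! i)) (card (blk i))" if "i < length bs" for i
    using that unfolding Ms_def blk_def by (simp add: case_prod_beta)
  have "\<forall>i. \<exists>g. i < length bs \<longrightarrow> bij_betw g {0..<card (blk i)} (blk i)"
    using fin ex_bij_betw_nat_finite unfolding blk_def by (metis nth_mem prod.collapse)
  then obtain h where h: "\<And>i. i < length bs \<Longrightarrow> bij_betw (h i) {0..<card (blk i)} (blk i)"
    by metis
  have "iso N (dsum Ms)"
  proof (rule iso_dsumI[where h = h and B = blk])
    fix i assume "i < length Ms"
    then show "bij_betw (h i) (ground (Ms ! i)) (blk i)"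
      using h Ms_nth by (simp add: Ms_def ground_U)
  next
    fix i j assume "i < length Ms" "j < length Ms" "i \<noteq> j"
    then show "blk i \<inter> blk j = {}"
      unfolding blk_def Ms_def using sorted_wrt_disjoint_nth[OF disj] by simp
  next
    show "(\<Union>i<length Ms. blk i) = ground N"
      unfolding Ms_def blk_def cover[symmetric] UN_snd_nth[symmetric] by simp
  next
    fix I assume I: "I \<subseteq> ground N"
    have "indep (Ms ! i) {x \<in> ground (Ms ! i). h i x \<in> I} \<longleftrightarrow> card (I \<inter> blk i) \<le> fst (bs ! i)"
      if "i < length bs" for i
      using card_preimage_bij_betw[OF h[OF that], of I] that
      by (auto simp: Ms_nth indep_U ground_U)
    then show "indep N I \<longleftrightarrow> (\<forall>i<length Ms. indep (Ms ! i) {x \<in> ground (Ms ! i). h i x \<in> I})"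
      unfolding ind[OF I] Ms_def blk_def by (simp add: all_set_conv_all_nth case_prod_beta)
  qed
  then show ?thesis
    unfolding Ms_def .
qed

section \<open>Minors\<close>

context wf_matroid
begin

lemma has_minor_isoI: "C \<subseteq> E \<Longrightarrow> E' \<subseteq> E - C \<Longrightarrow> iso (minor_of M C E') N \<Longrightarrow> has_minor_iso M N"
  unfolding has_minor_iso_def is_minor_def by blast

lemma minor_iso_embedding:
  assumes "has_minor_iso M N"
  obtains C \<psi> where "C \<subseteq> E" "inj_on \<psi> (ground N)" "\<psi> ` ground N \<subseteq> E - C"
    "\<And>I. I \<subseteq> ground N \<Longrightarrow> indep N I \<longleftrightarrow> r (\<psi> ` I \<union> C) = card I + r C"
proof -
  obtain M' where "is_minor M' M" and iso: "iso M' N"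
    using assms unfolding has_minor_iso_def by blast
  then obtain C E' where C: "C \<subseteq> E" "E' \<subseteq> E - C" and M': "M' = minor_of M C E'"
    unfolding is_minor_def by blast
  obtain f where f: "bij_betw f E' (ground N)"
    and ind: "\<And>I. I \<subseteq> E' \<Longrightarrow> indep (minor_of M C E') I \<longleftrightarrow> indep N (f ` I)"
    using iso unfolding iso_def M' ground_minor by blast
  define \<psi> where "\<psi> = inv_into E' f"
  have \<psi>: "bij_betw \<psi> (ground N) E'"
    unfolding \<psi>_def using f by (rule bij_betw_inv_into)
  show thesis
  proof (rule that[OF C(1) bij_betw_imp_inj_on[OF \<psi>]])
    show "\<psi> ` ground N \<subseteq> E - C"
      using bij_betw_imp_surj_on[OF \<psi>] C(2) by simp
    fix I assume I: "I \<subseteq> ground N"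
    have "f ` \<psi> ` I = I"
      unfolding \<psi>_def using f I by (intro image_inv_into_cancel) (auto simp: bij_betw_def)
    moreover have "\<psi> ` I \<subseteq> E'"
      using bij_betw_imp_surj_on[OF \<psi>] I by blast
    moreover have "card (\<psi> ` I) = card I"
      using bij_betw_imp_inj_on[OF \<psi>] I by (meson card_image inj_on_subset)
    ultimately show "indep N I \<longleftrightarrow> r (\<psi> ` I \<union> C) = card I + r C"
      using ind[of "\<psi> ` I"] by (simp add: indep_minor)
  qed
qed

lemma has_minor_U01_U23I:
  assumes "Z \<subseteq> E" "{x, a, b, c} \<subseteq> E - Z" "distinct [x, a, b, c]"
    and "\<And>I. I \<subseteq> {x, a, b, c} \<Longrightarrow> r (I \<union> Z) = card I + r Z \<longleftrightarrow> x \<notin> I \<and> \<not> {a, b, c} \<subseteq> I"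
  shows "has_minor_iso M (dsum [U 0 1, U 2 3])"
proof -
  have "iso (minor_of M Z {x, a, b, c}) (dsum (map (\<lambda>(k, B). U k (card B)) [(0, {x}), (2, {a, b, c})]))"
  proof (rule iso_dsum_uniformI)
    fix I assume "I \<subseteq> ground (minor_of M Z {x, a, b, c})"
    then have I: "I \<subseteq> {x, a, b, c}"
      by (simp add: ground_minor)
    have "card {a, b, c} = 3"
      using assms(3) by simp
    then have "card (I \<inter> {a, b, c}) \<le> 2 \<longleftrightarrow> \<not> {a, b, c} \<subseteq> I"
      using card_Int_le_card_minus_1_iff[of "{a, b, c}" I] by simp
    then show "indep (minor_of M Z {x, a, b, c}) I \<longleftrightarrow>
        (\<forall>(k, B)\<in>set [(0, {x}), (2, {a, b, c})]. card (I \<inter> B) \<le> k)"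
      using assms(4)[OF I] I by (auto simp: indep_minor)
  qed (use assms(3) in \<open>auto simp: ground_minor\<close>)
  then show ?thesis
    using assms(1,2) assms(3) by (intro has_minor_isoI[of Z "{x, a, b, c}"]) (simp_all add: numeral_3_eq_3)
qed

lemma has_minor_U11_U13I:
  assumes "Z \<subseteq> E" "{z, a, b, c} \<subseteq> E - Z" "distinct [z, a, b, c]"
    and "\<And>I. I \<subseteq> {z, a, b, c} \<Longrightarrow> r (I \<union> Z) = card I + r Z \<longleftrightarrow> card (I \<inter> {a, b, c}) \<le> 1"
  shows "has_minor_iso M (dsum [U 1 1, U 1 3])"
proof -
  have "iso (minor_of M Z {z, a, b, c}) (dsum (map (\<lambda>(k, B). U k (card B)) [(1, {z}), (1, {a, b, c})]))"
  proof (rule iso_dsum_uniformI)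
    fix I assume "I \<subseteq> ground (minor_of M Z {z, a, b, c})"
    then have I: "I \<subseteq> {z, a, b, c}"
      by (simp add: ground_minor)
    have "card (I \<inter> {z}) \<le> 1"
      by (simp add: card_le_Suc0_iff_eq)
    then show "indep (minor_of M Z {z, a, b, c}) I \<longleftrightarrow>
        (\<forall>(k, B)\<in>set [(1, {z}), (1, {a, b, c})]. card (I \<inter> B) \<le> k)"
      using assms(4)[OF I] I by (auto simp: indep_minor)
  qed (use assms(3) in \<open>auto simp: ground_minor\<close>)
  then show ?thesis
    using assms(1,2) assms(3) by (intro has_minor_isoI[of Z "{z, a, b, c}"]) (simp_all add: numeral_3_eq_3)
qed

text \<open>The \<open>U\<^sub>1\<^sub>,\<^sub>1 \<oplus> U\<^sub>1\<^sub>,\<^sub>3\<close> minor in rank terms: over \<open>Z\<close>, the elements \<open>a, b, c\<close> are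
  pairwise parallel non-loops and \<open>z\<close> is a coloop.\<close>
lemma has_minor_U11_U13_rankI:
  assumes "Z \<subseteq> E" "{z, a, b, c} \<subseteq> E - Z" "distinct [z, a, b, c]"
    and sing: "\<And>y. y \<in> {a, b, c} \<Longrightarrow> r (insert y Z) = r Z + 1"
    and all: "r (Z \<union> {a, b, c}) = r Z + 1"
    and coloop: "\<And>S. S \<subseteq> {a, b, c} \<Longrightarrow> r (insert z (S \<union> Z)) = r (S \<union> Z) + 1"
  shows "has_minor_iso M (dsum [U 1 1, U 1 3])"
proof (rule has_minor_U11_U13I[OF assms(1-3)])
  fix I assume I: "I \<subseteq> {z, a, b, c}"
  define J where "J = I - {z}"
  have J: "J \<subseteq> {a, b, c}" "finite J" "z \<notin> J"
    using I unfolding J_def by (auto intro: finite_subset)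
  have key: "r (J \<union> Z) = card J + r Z \<longleftrightarrow> card J \<le> 1"
  proof (cases "J = {}")
    case False
    then obtain y where y: "y \<in> J"
      by blast
    have "r (insert y Z) \<le> r (J \<union> Z)" "r (J \<union> Z) \<le> r (Z \<union> {a, b, c})"
      using y J by (auto intro: rank_mono)
    moreover have "r (insert y Z) = r Z + 1"
      using sing y J(1) by blast
    moreover have "card J \<ge> 1"
      using False J(2) by (simp add: Suc_le_eq card_gt_0_iff)
    ultimately show ?thesis
      using all by linarith
  qed simp
  have "I \<inter> {a, b, c} = J"
    using I assms(3) unfolding J_def by auto
  moreover have "r (I \<union> Z) = card I + r Z \<longleftrightarrow> r (J \<union> Z) = card J + r Z"
  proof (cases "z \<in> I")
    case True
    then have "I = insert z J" "I \<union> Z = insert z (J \<union> Z)"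
      unfolding J_def by auto
    then show ?thesis
      using coloop[OF J(1)] J(2,3) by simp
  qed (simp add: J_def)
  ultimately show "r (I \<union> Z) = card I + r Z \<longleftrightarrow> card (I \<inter> {a, b, c}) \<le> 1"
    using key by simp
qed

lemma contract_to_basis:
  assumes C0: "C0 \<subseteq> E" and F: "F \<subseteq> E - C0" "r (F \<union> C0) = card F + r C0"
    and X: "X \<subseteq> E - C0" "\<And>x. x \<in> X \<Longrightarrow> r (insert x C0) = r C0"
  obtains C where "ind C" "r E = card C + card F" "\<And>x. x \<in> X \<Longrightarrow> x \<notin> C \<and> r (insert x C) = r C"
proof -
  obtain B where B: "B \<subseteq> C0" "ind B" "card B = r C0"
    using rank_attained by blast
  have finF: "finite F"
    using F(1) finite_ground by (meson Diff_subset finite_subset)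
  have "r (F \<union> B) = card (F \<union> B)"
    using rank_Un_basis[OF B C0] F B(1,3) finite_indep[OF B(2)] finF
    by (subst card_Un_disjoint) auto
  moreover have "F \<union> B \<subseteq> E"
    using F(1) B(2) indep_subset_ground by blast
  ultimately have "ind (F \<union> B)"
    using indep_iff_rank by blast
  then obtain B2 where B2: "F \<union> B \<subseteq> B2" "B2 \<subseteq> E" "ind B2" "card B2 = r E"
    using indep_extend_basis[of "F \<union> B" E] \<open>F \<union> B \<subseteq> E\<close> by blast
  define C where "C = B2 - F"
  show thesis
  proof
    show "ind C"
      unfolding C_def using B2(3) indep_subset by blast
    have "card F \<le> card B2"
      using B2(1) finite_indep[OF B2(3)] by (meson card_mono le_sup_iff)
    then show "r E = card C + card F"
      unfolding C_def using B2(1,4) finF by (simp add: card_Diff_subset)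
  next
    fix x assume x: "x \<in> X"
    have rxB: "r (insert x B) = card B"
      using rank_Un_basis[OF B C0, of "{x}"] X(2)[OF x] B(3) by simp
    have "x \<notin> B"
      using x X(1) B(1) by blast
    then have notind: "\<not> ind (insert x B)"
      using rxB rank_indep[of "insert x B"] finite_indep[OF B(2)] by auto
    have "x \<notin> B2"
    proof
      assume "x \<in> B2"
      then have "insert x B \<subseteq> B2"
        using B2(1) by blast
      then show False
        using indep_subset[OF B2(3)] notind by simp
    qed
    have "r (insert x B) = r B"
      using rxB rank_indep[OF B(2)] by simp
    moreover have "B \<subseteq> C"
      using B2(1) B(1) F(1) unfolding C_def by blast
    ultimately have "r (insert x C) = r C"
      by (rule rank_insert_eq_mono)
    then show "x \<notin> C \<and> r (insert x C) = r C"
      unfolding C_def using \<open>x \<notin> B2\<close> by blast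
  qed
qed

lemma U01_U22_minor_data:
  assumes "has_minor_iso M (dsum [U 0 1, U 2 2])"
  obtains C x where "ind C" "x \<in> E" "x \<notin> C" "r (insert x C) = r C" "r E = card C + 2"
proof -
  let ?N = "dsum [U 0 1, U 2 2]"
  have ground_N: "ground ?N = {(0, 0), (1, 0), (1, 1)}"
    by (auto simp: ground_dsum ground_U less_Suc_eq numeral_2_eq_2)
  obtain C0 \<psi> where C0: "C0 \<subseteq> E" and \<psi>: "inj_on \<psi> (ground ?N)" "\<psi> ` ground ?N \<subseteq> E - C0"
    and ind: "\<And>I. I \<subseteq> ground ?N \<Longrightarrow> indep ?N I \<longleftrightarrow> r (\<psi> ` I \<union> C0) = card I + r C0"
    using minor_iso_embedding[OF assms] by blast
  define x f g where "x = \<psi> (0, 0)" and "f = \<psi> (1, 0)" and "g = \<psi> (1, 1)"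
  have "\<not> indep ?N {(0, 0)}"
    by (auto simp: indep_dsum ground_dsum indep_U ground_U)
  then have "r (insert x C0) \<noteq> r C0 + 1"
    using ind[of "{(0, 0)}"] ground_N unfolding x_def by simp
  then have x: "r (insert x C0) = r C0"
    using rank_insert_cases by blast
  have "indep ?N {(1, 0), (1, 1)}"
    by (auto simp: indep_dsum ground_dsum indep_U ground_U less_Suc_eq numeral_2_eq_2 Collect_disj_eq)
  moreover have "card {f, g} = 2"
    using inj_on_eq_iff[OF \<psi>(1), of "(1, 0)" "(1, 1)"] ground_N unfolding f_def g_def by simp
  ultimately have fg: "r ({f, g} \<union> C0) = card {f, g} + r C0"
    using ind[of "{(1, 0), (1, 1)}"] ground_N unfolding f_def g_def by simp
  have xfg: "{x, f, g} \<subseteq> E - C0"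
    using \<psi>(2) ground_N unfolding x_def f_def g_def by auto
  obtain C where C: "ind C" "r E = card C + card {f, g}"
    and "\<And>z. z \<in> {x} \<Longrightarrow> z \<notin> C \<and> r (insert z C) = r C"
    using contract_to_basis[OF C0 _ fg, of "{x}"] x xfg by auto
  then show thesis
    using that[of C x] xfg \<open>card {f, g} = 2\<close> by simp
qed

lemma U02_U11_minor_data:
  assumes "has_minor_iso M (dsum [U 0 2, U 1 1])"
  obtains C x y where "ind C" "x \<in> E" "y \<in> E" "x \<noteq> y" "x \<notin> C" "y \<notin> C"
    "r (insert x C) = r C" "r (insert y C) = r C" "r E = card C + 1"
proof -
  let ?N = "dsum [U 0 2, U 1 1]"
  have ground_N: "ground ?N = {(0, 0), (0, 1), (1, 0)}"
    by (auto simp: ground_dsum ground_U less_Suc_eq numeral_2_eq_2)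
  obtain C0 \<psi> where C0: "C0 \<subseteq> E" and \<psi>: "inj_on \<psi> (ground ?N)" "\<psi> ` ground ?N \<subseteq> E - C0"
    and ind: "\<And>I. I \<subseteq> ground ?N \<Longrightarrow> indep ?N I \<longleftrightarrow> r (\<psi> ` I \<union> C0) = card I + r C0"
    using minor_iso_embedding[OF assms] by blast
  define x y f where "x = \<psi> (0, 0)" and "y = \<psi> (0, 1)" and "f = \<psi> (1, 0)"
  have "\<not> indep ?N {(0, 0)}" "\<not> indep ?N {(0, 1)}"
    by (auto simp: indep_dsum ground_dsum indep_U ground_U)
  then have "r (insert x C0) \<noteq> r C0 + 1" "r (insert y C0) \<noteq> r C0 + 1"
    using ind[of "{(0, 0)}"] ind[of "{(0, 1)}"] ground_N unfolding x_def y_def by simp_all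
  then have xy: "r (insert x C0) = r C0" "r (insert y C0) = r C0"
    using rank_insert_cases by blast+
  have "indep ?N {(1, 0)}"
    by (auto simp: indep_dsum ground_dsum indep_U ground_U less_Suc_eq numeral_2_eq_2)
  then have f: "r ({f} \<union> C0) = card {f} + r C0"
    using ind[of "{(1, 0)}"] ground_N unfolding f_def by simp
  have xyf: "{x, y, f} \<subseteq> E - C0"
    using \<psi>(2) ground_N unfolding x_def y_def f_def by auto
  have "x \<noteq> y"
    using inj_on_eq_iff[OF \<psi>(1), of "(0, 0)" "(0, 1)"] ground_N unfolding x_def y_def by simp
  obtain C where C: "ind C" "r E = card C + card {f}"
    and "\<And>z. z \<in> {x, y} \<Longrightarrow> z \<notin> C \<and> r (insert z C) = r C"
    using contract_to_basis[OF C0 _ f, of "{x, y}"] xy xyf by auto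
  then show thesis
    using that[of C x y] xyf \<open>x \<noteq> y\<close> by simp
qed

text \<open>For independent \<open>Z\<close>, the circuits of the contraction \<open>M / Z\<close>.\<close>
definition contr_circuit :: "'a set \<Rightarrow> 'a set \<Rightarrow> bool" where
  "contr_circuit Z D \<longleftrightarrow> D \<subseteq> E \<and> D \<inter> Z = {} \<and> \<not> ind (Z \<union> D) \<and> (\<forall>S. S \<subset> D \<longrightarrow> ind (Z \<union> S))"

lemma contr_circuit_of_minimal_span:
  assumes y: "y \<in> E" "y \<notin> Z" "y \<notin> S1"
    and S1: "S1 \<subseteq> E" "S1 \<inter> Z = {}" "ind (Z \<union> S1)" "r (insert y (Z \<union> S1)) = r (Z \<union> S1)"
    and min: "\<And>S. S \<subset> S1 \<Longrightarrow> r (insert y (Z \<union> S)) = r (Z \<union> S) + 1"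
  shows "contr_circuit Z (insert y S1)"
  unfolding contr_circuit_def
proof (intro conjI allI impI)
  show "insert y S1 \<subseteq> E" "insert y S1 \<inter> Z = {}"
    using y S1 by auto
  have "y \<notin> Z \<union> S1" "finite (Z \<union> S1)"
    using y S1(3) finite_indep by auto
  then show "\<not> ind (Z \<union> insert y S1)"
    using rank_indep[of "insert y (Z \<union> S1)"] rank_indep[OF S1(3)] S1(4) by auto
  fix S assume S: "S \<subset> insert y S1"
  show "ind (Z \<union> S)"
  proof (cases "y \<in> S")
    case False
    then have "Z \<union> S \<subseteq> Z \<union> S1"
      using S by blast
    then show ?thesis
      by (rule indep_subset[OF S1(3)])
  next
    case True
    define S' where "S' = S - {y}"
    have S': "S' \<subset> S1" "Z \<union> S = insert y (Z \<union> S')"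
      using S True y(3) unfolding S'_def by blast+
    then have "ind (Z \<union> S')"
      using S1(3) indep_subset[of "Z \<union> S1" "Z \<union> S'"] by blast
    moreover have "y \<notin> Z \<union> S'"
      using y(2,3) S'(1) by blast
    ultimately show ?thesis
      using indep_insert_rank[OF _ y(1) _ min[OF S'(1)]] S'(2) by simp
  qed
qed

lemma contr_circuit_exists:
  assumes Z: "ind Z" and K: "circ K" and y: "y \<in> K" "y \<notin> Z"
  obtains D where "D \<subseteq> K - Z" "y \<in> D" "contr_circuit Z D"
proof -
  define T where "T = K - Z - {y}"
  let ?P = "\<lambda>S. S \<subseteq> T \<and> ind (Z \<union> S) \<and> r (insert y (Z \<union> S)) = r (Z \<union> S)"
  obtain B where B: "Z \<subseteq> B" "B \<subseteq> Z \<union> T" "ind B" "card B = r (Z \<union> T)"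
    using indep_extend_basis[of Z "Z \<union> T"] Z by blast
  have "r (insert y (Z \<union> T)) = r (Z \<union> T)"
    by (rule circuit_spans[OF K y(1)]) (auto simp: T_def)
  moreover have "r (insert y B) \<le> r (insert y (Z \<union> T))" "r B \<le> r (insert y B)"
    using B by (auto intro: rank_mono)
  moreover have "Z \<union> (B - Z) = B"
    using B by blast
  ultimately have "?P (B - Z)"
    using B rank_indep by auto
  then obtain S1 where S1: "?P S1" and S1min: "\<And>S. ?P S \<Longrightarrow> card S1 \<le> card S"
    using ex_has_least_nat[of ?P "B - Z" card] by blast
  have "finite S1"
    using S1 finite_circuit[OF K] finite_subset unfolding T_def by blast
  have "r (insert y (Z \<union> S)) = r (Z \<union> S) + 1" if S: "S \<subset> S1" for S
  proof -
    have "\<not> ?P S"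
      using S1min[of S] psubset_card_mono[OF \<open>finite S1\<close> S] by linarith
    then show ?thesis
      using S S1 indep_subset[of "Z \<union> S1" "Z \<union> S"] rank_insert_cases[of y "Z \<union> S"] by blast
  qed
  moreover have "y \<in> E" "S1 \<subseteq> E"
    using S1 y(1) circuit_subset_ground[OF K] unfolding T_def by blast+
  ultimately have "contr_circuit Z (insert y S1)"
    using S1 y(2) by (intro contr_circuit_of_minimal_span) (auto simp: T_def)
  moreover have "insert y S1 \<subseteq> K - Z"
    using S1 y unfolding T_def by auto
  ultimately show thesis
    using that by blast
qed

lemma contr_circuit_lift:
  assumes "ind Z" "contr_circuit Z D"
  obtains K where "circ K" "D \<subseteq> K" "K \<subseteq> Z \<union> D"
proof -
  have D: "D \<subseteq> E" "\<not> ind (Z \<union> D)" "\<And>S. S \<subset> D \<Longrightarrow> ind (Z \<union> S)"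
    using assms(2) unfolding contr_circuit_def by blast+
  obtain K where K: "K \<subseteq> Z \<union> D" "circ K"
    using dep_contains_circuit[of "Z \<union> D"] D(1,2) assms(1) indep_subset_ground by blast
  have "D \<subseteq> K"
  proof
    fix d assume d: "d \<in> D"
    show "d \<in> K"
    proof (rule ccontr)
      assume "d \<notin> K"
      then have "K \<subseteq> Z \<union> (D - {d})"
        using K by blast
      moreover have "ind (Z \<union> (D - {d}))"
        using D(3) d by blast
      ultimately show False
        using K(2) circuit_dep indep_subset by blast
    qed
  qed
  then show thesis
    using that K by blast
qed

text \<open>Contracting \<open>D - T\<close> as well turns \<open>T\<close> into a circuit next to the loop \<open>x\<close>.\<close>
lemma contract_rest_of_contr_circuit:
  assumes x: "x \<in> E" "x \<notin> Z" "r (insert x Z) = r Z"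
    and D: "contr_circuit Z D" "x \<notin> D" and T: "T \<subseteq> D" "T \<noteq> {}" and I: "I \<subseteq> insert x T"
  shows "r (I \<union> (Z \<union> (D - T))) = card I + r (Z \<union> (D - T)) \<longleftrightarrow> x \<notin> I \<and> \<not> T \<subseteq> I"
proof -
  have DE: "D \<subseteq> E" "D \<inter> Z = {}" and dep: "\<not> ind (Z \<union> D)"
    and min: "\<And>S. S \<subset> D \<Longrightarrow> ind (Z \<union> S)"
    using D(1) unfolding contr_circuit_def by blast+
  define Z' where "Z' = Z \<union> (D - T)"
  have Z': "ind Z'"
    unfolding Z'_def using T by (intro min) blast
  have "I \<subseteq> E" "I \<inter> Z' = {}"
    using I T(1) x(1,2) D(2) DE unfolding Z'_def by blast+
  then have "r (I \<union> Z') = card I + r Z' \<longleftrightarrow> ind (I \<union> Z')"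
    by (rule rank_Un_indep[OF Z'])
  also have "\<dots> \<longleftrightarrow> x \<notin> I \<and> \<not> T \<subseteq> I"
  proof
    assume ind: "ind (I \<union> Z')"
    show "x \<notin> I \<and> \<not> T \<subseteq> I"
    proof (intro conjI notI)
      assume "x \<in> I"
      then have "insert x Z \<subseteq> I \<union> Z'"
        unfolding Z'_def by blast
      then have indxZ: "ind (insert x Z)"
        by (rule indep_subset[OF ind])
      then have "ind Z"
        by (rule indep_subset) blast
      then show False
        using x rank_indep[OF indxZ] rank_indep[of Z] finite_indep[of Z] by simp
    next
      assume "T \<subseteq> I"
      then have "Z \<union> D \<subseteq> I \<union> Z'"
        unfolding Z'_def by blast
      then show False
        using indep_subset[OF ind] dep by blast
    qed
  next
    assume "x \<notin> I \<and> \<not> T \<subseteq> I"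
    then obtain d where d: "d \<in> T" "d \<notin> I" "x \<notin> I"
      by blast
    then have "ind (Z \<union> (D - {d}))"
      using T(1) by (intro min) blast
    moreover have "I \<union> Z' \<subseteq> Z \<union> (D - {d})"
      unfolding Z'_def using I d T(1) by blast
    ultimately show "ind (I \<union> Z')"
      by (rule indep_subset)
  qed
  finally show ?thesis
    unfolding Z'_def by simp
qed

lemma contr_circuit_triangle:
  assumes C: "ind C" and rE: "r E = card C + 2" and pqy: "p \<in> E" "q \<in> E" "y \<in> E"
    and pq: "r (insert q (insert p C)) = r C + 2" and py: "r (insert y (insert p C)) = r C + 2"
    and qy: "r (insert y (insert q C)) = r C + 2"
  shows "contr_circuit C {p, q, y}" "card {p, q, y} = 3"
proof -
  note pairs = indep_pair_of_rank[OF C pqy(2,1) pq] indep_pair_of_rank[OF C pqy(3,1) py]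
    indep_pair_of_rank[OF C pqy(3,2) qy]
  show card3: "card {p, q, y} = 3"
    using pairs by (auto simp: card_insert_if)
  show "contr_circuit C {p, q, y}"
    unfolding contr_circuit_def
  proof (intro conjI allI impI)
    show "{p, q, y} \<subseteq> E"
      using pqy by blast
    have "r (insert p C) = r C + 1"
      using pq rank_insert_le[of q "insert p C"] rank_insert_le[of p C] by simp
    then have "p \<notin> C" "q \<notin> insert p C" "y \<notin> insert p C"
      using rank_insert_notin[of p C] rank_insert_notin[of q "insert p C"]
        rank_insert_notin[of y "insert p C"] pq py by simp_all
    then show "{p, q, y} \<inter> C = {}"
      by blast
    then have "card (C \<union> {p, q, y}) = card C + 3"
      using card3 finite_indep[OF C] card_Un_disjoint[of C "{p, q, y}"] by (simp add: Int_commute)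
    moreover have "r (C \<union> {p, q, y}) \<le> r E"
      using pqy indep_subset_ground[OF C] by (intro rank_mono) blast
    ultimately show "\<not> ind (C \<union> {p, q, y})"
      using rank_indep[of "C \<union> {p, q, y}"] rE by auto
    fix S assume "S \<subset> {p, q, y}"
    then have "C \<union> S \<subseteq> {q, p} \<union> C \<or> C \<union> S \<subseteq> {y, p} \<union> C \<or> C \<union> S \<subseteq> {y, q} \<union> C"
      by blast
    then show "ind (C \<union> S)"
      using pairs indep_subset by blast
  qed
qed

end

section \<open>Consequences of each excluded minor\<close>

locale no_U01_U23 = wf_matroid +
  assumes no_U01_U23: "\<not> has_minor_iso M (dsum [U 0 1, U 2 3])"
begin

text \<open>Otherwise three elements of \<open>D\<close> together with the loop \<open>x\<close> of \<open>M / Z\<close> give a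
  \<open>U\<^sub>0\<^sub>,\<^sub>1 \<oplus> U\<^sub>2\<^sub>,\<^sub>3\<close> minor.\<close>
lemma contr_circuit_card_le_2:
  assumes x: "x \<in> E" "x \<notin> Z" "r (insert x Z) = r Z"
    and D: "contr_circuit Z D" "x \<notin> D"
  shows "card D \<le> 2"
proof (rule ccontr)
  assume "\<not> card D \<le> 2"
  then obtain T where "T \<subseteq> D" "card T = 3"
    using obtain_subset_with_card_n[of 3 D] by auto
  then obtain a b c where abc: "{a, b, c} \<subseteq> D" "distinct [a, b, c]"
    unfolding card_3_iff by auto
  have DE: "D \<subseteq> E" "D \<inter> Z = {}" and min: "\<And>S. S \<subset> D \<Longrightarrow> ind (Z \<union> S)"
    using D(1) unfolding contr_circuit_def by blast+
  define Z' where "Z' = Z \<union> (D - {a, b, c})"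
  have "ind Z'"
    unfolding Z'_def using abc(1) by (intro min) blast
  then have "Z' \<subseteq> E"
    by (rule indep_subset_ground)
  moreover have "{x, a, b, c} \<subseteq> E - Z'" "distinct [x, a, b, c]"
    using x abc DE D(2) unfolding Z'_def by auto
  moreover have "r (I \<union> Z') = card I + r Z' \<longleftrightarrow> x \<notin> I \<and> \<not> {a, b, c} \<subseteq> I"
    if "I \<subseteq> {x, a, b, c}" for I
    unfolding Z'_def using contract_rest_of_contr_circuit[OF x D abc(1)] that by simp
  ultimately have "has_minor_iso M (dsum [U 0 1, U 2 3])"
    by (intro has_minor_U01_U23I)
  then show False
    using no_U01_U23 by blast
qed

lemma circuit_card_le_2_if_separated:
  assumes K: "circ K" "w \<in> K" and D: "circ D" "D \<inter> K = {}"
    and sep: "\<And>K'. circ K' \<Longrightarrow> K' \<subseteq> (K - {w}) \<union> D \<Longrightarrow> K' \<inter> D = {} \<or> K' \<subseteq> D"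
  shows "card D \<le> 2"
proof -
  define Z where "Z = K - {w}"
  have Z: "ind Z"
    unfolding Z_def using circuit_remove_indep[OF K] .
  have min: "ind (Z \<union> S)" if S: "S \<subset> D" for S
  proof -
    have "\<not> K' \<subseteq> Z \<union> S" if K': "circ K'" for K'
    proof
      assume sub: "K' \<subseteq> Z \<union> S"
      then have "K' \<inter> D = {} \<or> K' \<subseteq> D"
        using sep[OF K'] S unfolding Z_def by blast
      then show False
      proof
        assume "K' \<inter> D = {}"
        then have "K' \<subseteq> K - {w}"
          using sub S unfolding Z_def by blast
        then show False
          using circuit_incomparable[OF K' K(1)] K(2) by blast
      next
        assume "K' \<subseteq> D"
        then show False
          using circuit_incomparable[OF K' D(1)] sub S D(2) unfolding Z_def by blast
      qed
    qed
    moreover have "Z \<union> S \<subseteq> E"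
      using Z S indep_subset_ground circuit_subset_ground[OF D(1)] by blast
    ultimately show ?thesis
      using indep_iff_no_circuit by blast
  qed
  have "contr_circuit Z D"
    unfolding contr_circuit_def
  proof (intro conjI allI impI)
    show "D \<subseteq> E"
      using D(1) by (rule circuit_subset_ground)
    show "D \<inter> Z = {}"
      using D(2) unfolding Z_def by blast
    show "\<not> ind (Z \<union> D)"
      using circuit_dep[OF D(1)] indep_subset[of "Z \<union> D" D] by blast
  qed (rule min)
  moreover have "r (insert w Z) = r Z"
    unfolding Z_def by (rule circuit_spans[OF K]) simp
  moreover have "w \<in> E" "w \<notin> Z" "w \<notin> D"
    using K D(2) circuit_subset_ground[OF K(1)] unfolding Z_def by auto
  ultimately show ?thesis
    using contr_circuit_card_le_2 by blast
qed

lemma contr_circuit_through: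
  assumes Kx: "circ Kx" "x \<in> Kx" and K: "circ K" "y \<in> K" "y \<notin> Kx"
  obtains D K' where "y \<in> D" "D \<subseteq> K - Kx" "card D \<le> 2" "circ K'" "D \<subseteq> K'"
    "K' \<subseteq> (Kx - {x}) \<union> D" "K' \<inter> Kx = {} \<Longrightarrow> K = D"
proof -
  define Z where "Z = Kx - {x}"
  have Z: "ind Z" "x \<notin> Z" "r (insert x Z) = r Z"
    unfolding Z_def by (rule circuit_remove_indep[OF Kx], blast, rule circuit_spans[OF Kx], simp)
  obtain D where D: "D \<subseteq> K - Z" "y \<in> D" "contr_circuit Z D"
    using contr_circuit_exists[OF Z(1) K(1,2)] K(3) unfolding Z_def by blast
  have "x \<notin> D"
  proof
    assume "x \<in> D"
    then have "{x} \<subset> D"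
      using D(2) K(3) Kx(2) by blast
    then have "ind (Z \<union> {x})"
      using D(3) unfolding contr_circuit_def by blast
    moreover have "Z \<union> {x} = Kx"
      unfolding Z_def using Kx(2) by blast
    ultimately show False
      using circuit_dep[OF Kx(1)] by simp
  qed
  then have "card D \<le> 2"
    using contr_circuit_card_le_2[OF _ Z(2,3) D(3)] Kx circuit_subset_ground by blast
  moreover obtain K' where K': "circ K'" "D \<subseteq> K'" "K' \<subseteq> Z \<union> D"
    using contr_circuit_lift[OF Z(1) D(3)] by blast
  moreover have "D \<subseteq> K - Kx"
    using D(1) \<open>x \<notin> D\<close> unfolding Z_def by blast
  moreover have "K = D" if "K' \<inter> Kx = {}"
  proof -
    have "K' = D"
      using K' that unfolding Z_def by blast
    then show ?thesis
      using circuit_incomparable[OF K'(1) K(1)] D(1) by blast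
  qed
  ultimately show thesis
    using that D(2) unfolding Z_def by blast
qed

text \<open>The contraction \<open>M / C\<close> has rank 2 and a loop \<open>x\<close>, so it has no three pairwise non-parallel
  points.\<close>
lemma contraction_rank_2_parallel:
  assumes C: "ind C" and x: "x \<in> E" "x \<notin> C" "r (insert x C) = r C" and rE: "r E = card C + 2"
    and pqy: "p \<in> E" "q \<in> E" "y \<in> E"
    and pq: "r (insert q (insert p C)) = r C + 2" and py: "r (insert y (insert p C)) = r C + 2"
  shows "r (insert y (insert q C)) = r C + 1"
proof (rule ccontr)
  assume ne: "r (insert y (insert q C)) \<noteq> r C + 1"
  have "r (insert u C) = r C + 1" if "r (insert u (insert p C)) = r C + 2" for u
    using that rank_insert_le[of p "insert u C"] rank_insert_le[of u C]
    by (simp add: insert_commute)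
  moreover have "r (insert p C) = r C + 1"
    using pq rank_insert_le[of q "insert p C"] rank_insert_le[of p C] by simp
  ultimately have one: "r (insert u C) = r C + 1" if "u \<in> {p, q, y}" for u
    using that pq py by blast
  then have "r (insert y (insert q C)) = r C + 2"
    using ne rank_insert_cases[of y "insert q C"] by auto
  then have "contr_circuit C {p, q, y}" "card {p, q, y} = 3"
    using contr_circuit_triangle[OF C rE pqy pq py] by blast+
  moreover have "x \<notin> {p, q, y}"
    using one x(3) by auto
  ultimately show False
    using contr_circuit_card_le_2[OF x(1-3)] by fastforce
qed

lemma circuit_card_le_2_if_disconnected:
  assumes disconn: "\<not> connected M" and in_circuit: "\<And>w. w \<in> E \<Longrightarrow> \<exists>K. circ K \<and> w \<in> K"
    and D: "circ D"
  shows "card D \<le> 2"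
proof -
  obtain d where d: "d \<in> D"
    using circuit_nonempty[OF D] by blast
  obtain u v where uv: "u \<in> E" "v \<in> E" "\<not> circuit_linked u v"
    using disconn unfolding connected_def circuit_linked_def by blast
  then obtain w where w: "w \<in> E" "\<not> circuit_linked w d"
    using circuit_linked_trans circuit_linked_sym by blast
  obtain K where K: "circ K" "w \<in> K"
    using in_circuit[OF w(1)] by blast
  have linked: "circuit_linked a b" if "circ K'" "a \<in> K'" "b \<in> K'" for K' a b
    using that unfolding circuit_linked_def by blast
  have "D \<inter> K = {}"
  proof (rule ccontr)
    assume "D \<inter> K \<noteq> {}"
    then obtain c where "c \<in> D" "c \<in> K"
      by blast
    then have "circuit_linked w c" "circuit_linked c d"
      using linked[OF K] linked[OF D _ d] by blast+
    then show False
      using w(2) circuit_linked_trans by blast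
  qed
  moreover have "K' \<inter> D = {} \<or> K' \<subseteq> D" if K': "circ K'" "K' \<subseteq> (K - {w}) \<union> D" for K'
  proof (rule ccontr)
    assume "\<not> (K' \<inter> D = {} \<or> K' \<subseteq> D)"
    then obtain c t where "c \<in> K'" "c \<in> K" "t \<in> K'" "t \<in> D"
      using K'(2) by blast
    then have "circuit_linked w c" "circuit_linked c t" "circuit_linked t d"
      using linked[OF K] linked[OF K'(1)] linked[OF D _ d] by blast+
    then show False
      using w(2) circuit_linked_trans by blast
  qed
  ultimately show ?thesis
    using circuit_card_le_2_if_separated[OF K D] by blast
qed

end

locale no_U11_U13 = wf_matroid +
  assumes no_U11_U13: "\<not> has_minor_iso M (dsum [U 1 1, U 1 3])"
begin

text \<open>In \<open>M / C\<close>, a coloop \<open>p\<close> and three parallel points would form a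
  \<open>U\<^sub>1\<^sub>,\<^sub>1 \<oplus> U\<^sub>1\<^sub>,\<^sub>3\<close> minor.\<close>
lemma no_coloop_and_parallel_triple:
  assumes C: "C \<subseteq> E" and p: "p \<in> E" "r (insert p C) = r C + 1"
    and abc: "{a, b, c} \<subseteq> E" "distinct [a, b, c]"
    and two: "\<And>s. s \<in> {a, b, c} \<Longrightarrow> r (insert p (insert s C)) = r C + 2"
    and par: "r (C \<union> {a, b, c}) = r C + 1"
  shows False
proof -
  have one: "r (insert s C) = r C + 1" if "s \<in> {a, b, c}" for s
    using two[OF that] rank_insert_le[of p "insert s C"] rank_insert_cases[of s C] by auto
  have "p \<notin> insert s C" if "s \<in> {a, b, c}" for s
    using two[OF that] one[OF that] rank_insert_notin[of p "insert s C"] by simp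
  moreover have "s \<notin> C" if "s \<in> {a, b, c}" for s
    using one[OF that] rank_insert_notin by blast
  ultimately have dist: "distinct [p, a, b, c]" "{p, a, b, c} \<subseteq> E - C"
    using abc p(1) by auto
  have "r (insert p (S \<union> C)) = r (S \<union> C) + 1" if S: "S \<subseteq> {a, b, c}" for S
  proof (cases "S = {}")
    case False
    then obtain s where s: "s \<in> S"
      by blast
    have "r (insert s C) \<le> r (S \<union> C)" "r (S \<union> C) \<le> r (C \<union> {a, b, c})"
      using s S by (auto intro: rank_mono)
    then have rS: "r (S \<union> C) = r C + 1"
      using one s S par by force
    have "r (insert p (insert s C)) \<le> r (insert p (S \<union> C))"
      using s by (intro rank_mono) auto
    then show ?thesis
      using two s S rS rank_insert_le[of p "S \<union> C"] by force
  qed (use p in simp)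
  then have "has_minor_iso M (dsum [U 1 1, U 1 3])"
    using has_minor_U11_U13_rankI[OF C dist(2,1)] one par by blast
  then show False
    using no_U11_U13 by blast
qed

text \<open>Two distinct meeting circuits of \<open>M | W\<close> contain either a smaller such pair or three
  elements that are parallel in a contraction, which together with the coloop \<open>z\<close> are excluded
  by \<open>no_coloop_and_parallel_triple\<close>.\<close>
lemma circuits_disjoint_if_coloop:
  assumes W: "W \<subseteq> E" "z \<in> W" "r (W - {z}) < r W"
    and K: "circ K1" "circ K2" "K1 \<subseteq> W" "K2 \<subseteq> W" "K1 \<noteq> K2"
  shows "K1 \<inter> K2 = {}"
  using K
proof (induction "card (K1 \<union> K2)" arbitrary: K1 K2 rule: less_induct)
  case less
  note K1 = less.prems(1,3) and K2 = less.prems(2,4)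
  show ?case
  proof (rule ccontr)
    assume "K1 \<inter> K2 \<noteq> {}"
    then obtain e where e: "e \<in> K1 \<inter> K2"
      by blast
    obtain a where a: "a \<in> K1 - K2"
      using circuit_incomparable[OF K1(1) K2(1)] less.prems(5) by blast
    obtain b where b: "b \<in> K2 - K1"
      using circuit_incomparable[OF K2(1) K1(1)] less.prems(5) by blast
    define Z where "Z = K1 \<union> K2 - {a, b, e}"
    have ZE: "Z \<subseteq> E"
      unfolding Z_def using K1 K2 W(1) by blast
    have spans: "r (insert t Z) = r (K1 \<union> K2)" if "t \<in> {a, b, e}" for t
      unfolding Z_def using circuit_pair_spanning_triple[OF K1(1) K2(1) a b e that] .
    have "r Z \<le> r (K1 \<union> K2)"
      by (rule rank_mono) (auto simp: Z_def)
    show False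
    proof (cases "r Z = r (K1 \<union> K2)")
      case True
      have "a \<in> E" "a \<notin> Z" "r (insert a Z) = r Z"
        using a K1 W(1) spans[of a] True unfolding Z_def by auto
      then obtain K3 where K3: "circ K3" "a \<in> K3" "K3 \<subseteq> insert a Z"
        by (rule spanned_circuit[OF ZE])
      have "K3 \<union> K1 \<subset> K1 \<union> K2"
        using K3(3) a b unfolding Z_def by blast
      then have "card (K3 \<union> K1) < card (K1 \<union> K2)"
        using finite_circuit[OF K1(1)] finite_circuit[OF K2(1)] by (simp add: psubset_card_mono)
      moreover have "K3 \<noteq> K1" "K3 \<subseteq> W"
        using K3(3) e a K1(2) K2(2) unfolding Z_def by blast+
      ultimately have "K3 \<inter> K1 = {}"
        using less.hyps[OF _ K3(1) K1(1) _ K1(2)] by blast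
      then show False
        using K3(2) a by blast
    next
      case False
      then have rank_Un: "r (K1 \<union> K2) = r Z + 1"
        using spans[of a] rank_insert_le[of a Z] \<open>r Z \<le> r (K1 \<union> K2)\<close> by simp
      have "z \<notin> K1" "z \<notin> K2"
        using coloop_notin_circuit[OF W(3) K1] coloop_notin_circuit[OF W(3) K2] by blast+
      then have sub: "insert t Z \<subseteq> W - {z}" if "t \<in> {a, b, e}" for t
        using that a b e K1(2) K2(2) unfolding Z_def by blast
      have "r (insert z (insert t Z)) = r Z + 2" if "t \<in> {a, b, e}" for t
        using coloop_rank_insert[OF W(2,3) sub[OF that]] spans[OF that] rank_Un by simp
      moreover have "r (insert z Z) = r Z + 1"
        using coloop_rank_insert[OF W(2,3)] sub[of a] by blast
      moreover have "Z \<union> {a, b, e} = K1 \<union> K2"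
        unfolding Z_def using a b e by blast
      moreover have "{a, b, e} \<subseteq> E" "distinct [a, b, e]" "z \<in> E"
        using a b e K1 K2 W(1,2) circuit_subset_ground by auto
      ultimately show False
        using no_coloop_and_parallel_triple[OF ZE, of z a b e] rank_Un by (simp add: insert_commute)
    qed
  qed
qed

text \<open>\<open>f\<close> is a coloop of the restriction of \<open>M\<close> to \<open>f\<close> and the closure of \<open>C\<close>.\<close>
lemma circuits_in_closure_disjoint:
  assumes C: "C \<subseteq> E" and f: "f \<in> E" "r (insert f C) = r C + 1"
    and K: "circ K1" "circ K2" "K1 \<subseteq> {e \<in> E. r (insert e C) = r C}"
      "K2 \<subseteq> {e \<in> E. r (insert e C) = r C}" "K1 \<noteq> K2"
  shows "K1 \<inter> K2 = {}"
proof -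
  define H where "H = {e \<in> E. r (insert e C) = r C}"
  have CH: "C \<subseteq> H" and fH: "f \<notin> H" and HE: "H \<subseteq> E"
    unfolding H_def using C f by (auto simp: insert_absorb)
  have "r (C \<union> H) = r C"
    using finite_subset[OF HE finite_ground] unfolding H_def by (intro rank_Un_spanned) auto
  then have "r H = r C"
    using rank_mono[of H "C \<union> H"] rank_mono[OF CH] by simp
  moreover have "r (insert f C) \<le> r (insert f H)"
    using CH by (intro rank_mono) auto
  ultimately have "r (insert f H - {f}) < r (insert f H)"
    using fH f(2) by simp
  then show ?thesis
    using circuits_disjoint_if_coloop[of "insert f H" f K1 K2] K HE f(1) unfolding H_def by blast
qed

end

section \<open>Connected matroids\<close>

locale no_U01_U23_U11_U13 = no_U01_U23 + no_U11_U13
begin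

text \<open>By \<open>contraction_rank_2_parallel\<close> all points of \<open>M / C\<close> off \<open>p\<close> are parallel, so three of
  them would form a \<open>U\<^sub>1\<^sub>,\<^sub>1 \<oplus> U\<^sub>1\<^sub>,\<^sub>3\<close> minor together with \<open>p\<close>.\<close>
lemma rank_2_contraction_three_points_off:
  assumes C: "ind C" and x: "x \<in> E" "x \<notin> C" "r (insert x C) = r C" and rE: "r E = card C + 2"
    and p: "p \<in> E" "r (insert p C) = r C + 1"
    and qs: "{q, q2, y} \<subseteq> E" "distinct [q, q2, y]"
    and two: "\<And>s. s \<in> {q, q2, y} \<Longrightarrow> r (insert p (insert s C)) = r C + 2"
  shows False
proof -
  have two': "r (insert s (insert p C)) = r C + 2" if "s \<in> {q, q2, y}" for s
    using two[OF that] by (simp add: insert_commute)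
  have qC: "r (insert q C) = r C + 1"
    using two[of q] rank_insert_le[of p "insert q C"] rank_insert_cases[of q C] by auto
  have "r (insert t (insert q C)) = r (insert q C)" if "t \<in> {q2, y}" for t
    using contraction_rank_2_parallel[OF C x rE p(1), of q t] two' qs that qC by auto
  then have "r (insert q C \<union> {q2, y}) = r (insert q C)"
    by (intro rank_Un_spanned) auto
  then have "r (C \<union> {q, q2, y}) = r C + 1"
    using qC by (simp add: insert_commute)
  then show False
    using no_coloop_and_parallel_triple[OF indep_subset_ground[OF C] p qs two] by blast
qed

lemma connected_rank_2_contraction_disjoint_circuits:
  assumes conn: "connected M"
    and C: "ind C" and x: "x \<in> E" "x \<notin> C" "r (insert x C) = r C" and rE: "r E = card C + 2"
  obtains q where "q \<in> E" "r (insert q C) = r C + 1"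
    "\<And>K1 K2. circ K1 \<Longrightarrow> circ K2 \<Longrightarrow> q \<notin> K1 \<Longrightarrow> q \<notin> K2 \<Longrightarrow> K1 \<noteq> K2 \<Longrightarrow> K1 \<inter> K2 = {}"
proof -
  have rC: "r C = card C"
    using C by (rule rank_indep)
  obtain p where p: "p \<in> E" "r (insert p C) = r C + 1"
    using rank_increase_exists[of E C] rE rC by auto
  define T where "T = insert p C"
  have rT: "r T = r C + 1"
    unfolding T_def using p(2) .
  obtain q where q: "q \<in> E" "r (insert q T) = r T + 1"
    using rank_increase_exists[of E T] rT rE rC by auto
  have "r (insert x T) = r T"
    using rank_insert_eq_mono[OF x(3)] unfolding T_def by blast
  then have "q \<noteq> x"
    using q(2) by auto
  then obtain Kq where Kq: "circ Kq" "q \<in> Kq" "x \<in> Kq"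
    using conn q(1) x(1) unfolding connected_def by blast
  have rEq: "r (E - {q}) = r E"
    using circuit_remove_rank[OF Kq(1,2) circuit_subset_ground[OF Kq(1)]] .
  then obtain q2 where q2: "q2 \<in> E - {q}" "r (insert q2 T) = r T + 1"
    using rank_increase_exists[of "E - {q}" T] rT rE rC by auto
  have pq: "r (insert p (insert s C)) = r C + 2" if "r (insert s T) = r T + 1" for s
    using that rT unfolding T_def by (simp add: insert_commute)
  have only_two: "r (insert y T) = r T" if y: "y \<in> E" "y \<noteq> q" "y \<noteq> q2" for y
  proof (rule ccontr)
    assume "r (insert y T) \<noteq> r T"
    then have yT: "r (insert y T) = r T + 1"
      using rank_insert_cases by blast
    have "r (insert s T) = r T + 1" if "s \<in> {q, q2, y}" for s
      using that q(2) q2(2) yT by blast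
    then have "r (insert p (insert s C)) = r C + 2" if "s \<in> {q, q2, y}" for s
      using pq that by blast
    moreover have "{q, q2, y} \<subseteq> E" "distinct [q, q2, y]"
      using q(1) q2(1) y by auto
    ultimately show False
      using rank_2_contraction_three_points_off[OF C x rE p] by blast
  qed
  have "r (E - {q} - {q2}) < r (E - {q})"
  proof -
    have "r (T \<union> (E - {q} - {q2})) = r T"
      using only_two finite_ground by (intro rank_Un_spanned) auto
    moreover have "r (E - {q} - {q2}) \<le> r (T \<union> (E - {q} - {q2}))"
      by (rule rank_mono) auto
    ultimately show ?thesis
      using rEq rT rE rC by simp
  qed
  then have "K1 \<inter> K2 = {}"
    if "circ K1" "circ K2" "q \<notin> K1" "q \<notin> K2" "K1 \<noteq> K2" for K1 K2
    using circuits_disjoint_if_coloop[of "E - {q}" q2 K1 K2] q2(1) that circuit_subset_ground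
    by blast
  moreover have "r (insert q C) = r C + 1"
    using pq[OF q(2)] rank_insert_le[of p "insert q C"] rank_insert_cases[of q C] by auto
  ultimately show thesis
    using that q(1) by blast
qed

lemma connected_no_rank_2_contraction_with_loop:
  assumes conn: "connected M"
    and C: "ind C" and x: "x \<in> E" "x \<notin> C" "r (insert x C) = r C" and rE: "r E = card C + 2"
  shows False
proof -
  obtain q where q: "q \<in> E" "r (insert q C) = r C + 1"
    and disj: "\<And>K1 K2. circ K1 \<Longrightarrow> circ K2 \<Longrightarrow> q \<notin> K1 \<Longrightarrow> q \<notin> K2 \<Longrightarrow> K1 \<noteq> K2 \<Longrightarrow> K1 \<inter> K2 = {}"
    using connected_rank_2_contraction_disjoint_circuits[OF assms] by blast
  obtain Kx where Kx: "circ Kx" "x \<in> Kx" "Kx \<subseteq> insert x C"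
    using spanned_circuit[OF indep_subset_ground[OF C] x] by blast
  define Z where "Z = Kx - {x}"
  have Z: "ind Z" "Z \<subseteq> C"
    unfolding Z_def using circuit_remove_indep[OF Kx(1,2)] Kx(3) by blast+
  have qZ: "r (insert q Z) = r Z + 1"
    using rank_insert_notin_mono[OF q(2) Z(2)] .
  have "card Z \<le> card C"
    using Z(2) finite_indep[OF C] by (rule card_mono[rotated])
  then have "r (insert q Z) < r E"
    using qZ rank_indep[OF Z(1)] rE by linarith
  then obtain y where y: "y \<in> E" "r (insert y (insert q Z)) = r (insert q Z) + 1"
    using rank_increase_exists[of E "insert q Z"] by blast
  have "r (insert x (insert q Z)) = r (insert q Z)"
    using circuit_spans[OF Kx(1,2)] unfolding Z_def by blast
  then have yKx: "y \<notin> Kx" and yq: "y \<noteq> q"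
    using y(2) rank_insert_notin[OF y(2)] unfolding Z_def by auto
  have "x \<noteq> y"
    using Kx(2) yKx by blast
  then obtain K where K: "circ K" "x \<in> K" "y \<in> K"
    using conn x(1) y(1) unfolding connected_def by blast
  obtain D K' where D: "y \<in> D" "D \<subseteq> K - Kx" "card D \<le> 2"
    and K': "circ K'" "D \<subseteq> K'" "K' \<subseteq> Z \<union> D" and KD: "K' \<inter> Kx = {} \<Longrightarrow> K = D"
    using contr_circuit_through[OF Kx(1,2) K(1,3) yKx] unfolding Z_def by blast
  have "q \<notin> D"
  proof
    assume qD: "q \<in> D"
    have "finite D"
      using D(2) finite_circuit[OF K(1)] finite_subset by blast
    then have "D = {y, q}"
      using card_le_2_eq_pair[OF _ D(3) D(1) qD yq] by blast
    then have "K' \<subseteq> {y, q} \<union> Z"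
      using K'(3) by blast
    moreover have "ind ({y, q} \<union> Z)"
      using y qZ yq circuit_subset_ground[OF K(1)] q(1) rank_insert_notin[OF qZ]
      by (intro indep_Un_of_rank[OF Z(1)]) (auto simp: insert_commute)
    ultimately show False
      using K'(1) circuit_dep indep_subset by blast
  qed
  moreover have "q \<notin> C" "q \<notin> Kx" "x \<noteq> q"
    using q(2) rank_insert_notin x(3) Kx(3) by auto
  ultimately have "q \<notin> K'" "q \<notin> Kx"
    using K'(3) Z(2) by auto
  moreover have "K' \<noteq> Kx"
    using K'(2) D(1) yKx by blast
  ultimately have "K = D"
    using KD disj[OF K'(1) Kx(1)] by blast
  then show False
    using K(2) D(2) Kx(2) by blast
qed

lemma connected_no_rank_1_contraction_with_two_loops:
  assumes conn: "connected M"
    and C: "ind C" and xy: "x \<in> E" "y \<in> E" "x \<noteq> y" "x \<notin> C" "y \<notin> C"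
      "r (insert x C) = r C" "r (insert y C) = r C"
    and rE: "r E = card C + 1"
  shows False
proof -
  have CE: "C \<subseteq> E"
    using C by (rule indep_subset_ground)
  obtain f where f: "f \<in> E" "r (insert f C) = r C + 1"
    using rank_increase_exists[of E C] rE rank_indep[OF C] by auto
  define H where "H = {e \<in> E. r (insert e C) = r C}"
  have CH: "C \<subseteq> H" and fH: "f \<notin> H" and xyH: "x \<in> H" "y \<in> H"
    unfolding H_def using CE f xy by (auto simp: insert_absorb)
  have disj: "K1 \<inter> K2 = {}" if "circ K1" "circ K2" "K1 \<subseteq> H" "K2 \<subseteq> H" "K1 \<noteq> K2" for K1 K2
    using circuits_in_closure_disjoint[OF CE f that(1,2)] that(3-5) unfolding H_def by blast
  obtain Kx where Kx: "circ Kx" "x \<in> Kx" "Kx \<subseteq> insert x C"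
    using spanned_circuit[OF CE xy(1,4,6)] by blast
  obtain Ky where Ky: "circ Ky" "y \<in> Ky" "Ky \<subseteq> insert y C"
    using spanned_circuit[OF CE xy(2,5,7)] by blast
  have KyH: "Ky \<subseteq> H"
    using Ky(3) CH xyH by blast
  have "Kx \<inter> Ky = {}"
    using disj[OF Kx(1) Ky(1) _ KyH] Kx(2,3) Ky(3) CH xyH xy(3,4) by blast
  then have yKx: "y \<notin> Kx"
    using Ky(2) by blast
  have "f \<noteq> y"
    using fH xyH by blast
  then obtain K where K: "circ K" "y \<in> K" "f \<in> K"
    using conn xy(2) f(1) unfolding connected_def by blast
  obtain D K' where D: "y \<in> D" "D \<subseteq> K - Kx" "card D \<le> 2"
    and K': "circ K'" "D \<subseteq> K'" "K' \<subseteq> (Kx - {x}) \<union> D" and KD: "K' \<inter> Kx = {} \<Longrightarrow> K = D"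
    using contr_circuit_through[OF Kx(1,2) K(1,2) yKx] by blast
  have "D \<subseteq> H"
  proof
    fix d assume d: "d \<in> D"
    show "d \<in> H"
    proof (cases "d = y")
      case False
      have "finite D"
        using D(2) finite_circuit[OF K(1)] finite_subset by blast
      then have "D = {y, d}"
        using card_le_2_eq_pair[OF _ D(3) D(1) d] False by metis
      then have "K' - {d} \<subseteq> insert y C"
        using K'(3) Kx(3) by blast
      then have "r (insert d C) = r C"
        using circuit_spans_closure[OF K'(1)] K'(2) d xy(7) by blast
      then show ?thesis
        unfolding H_def using d D(2) circuit_subset_ground[OF K(1)] by blast
    qed (use xyH in simp)
  qed
  then have "K' \<subseteq> H"
    using K'(3) Kx(3) CH by blast
  then have "K' = Ky"
    using disj[OF K'(1) Ky(1) _ KyH] K'(2) D(1) Ky(2) by blast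
  then have "K = D"
    using KD \<open>Kx \<inter> Ky = {}\<close> by blast
  then show False
    using K(3) \<open>D \<subseteq> H\<close> fH by blast
qed

lemma connected_imp_sparse_paving:
  assumes "connected M"
  shows "sparse_paving M"
  unfolding sparse_paving_def
proof
  show "\<not> has_minor_iso M (dsum [U 0 1, U 2 2])"
    using U01_U22_minor_data connected_no_rank_2_contraction_with_loop[OF assms] by metis
  show "\<not> has_minor_iso M (dsum [U 0 2, U 1 1])"
    using U02_U11_minor_data connected_no_rank_1_contraction_with_two_loops[OF assms] by metis
qed

end

section \<open>Disconnected matroids\<close>

definition loops_pairs_coloops_form :: "'a matroid \<Rightarrow> nat \<Rightarrow> bool" where
  "loops_pairs_coloops_form M n \<longleftrightarrow> (\<exists>k l. k \<le> n \<and> l \<le> min k (n - k) \<and>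
     iso M (dsum ([U 0 (n - k - l)] @ replicate l (U 1 2) @ [U (k - l) (k - l)])))"

definition loops_and_line_form :: "'a matroid \<Rightarrow> nat \<Rightarrow> bool" where
  "loops_and_line_form M n \<longleftrightarrow> (\<exists>l. 3 \<le> l \<and> l \<le> n - 1 \<and> iso M (dsum [U 0 (n - l), U 1 l]))"

definition circuit_and_coloops_form :: "'a matroid \<Rightarrow> nat \<Rightarrow> bool" where
  "circuit_and_coloops_form M n \<longleftrightarrow>
     (\<exists>l. 3 \<le> l \<and> l \<le> n - 1 \<and> iso M (dsum [U (l - 1) l, U (n - l) (n - l)]))"

context wf_matroid
begin

lemma circuit_and_coloops_formI:
  assumes D: "D \<subseteq> E" "3 \<le> card D" "E - D \<noteq> {}"
    and ind: "\<And>I. I \<subseteq> E \<Longrightarrow> ind I \<longleftrightarrow> \<not> D \<subseteq> I"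
  shows "circuit_and_coloops_form M (card E)"
proof -
  have fin: "finite D" "finite (E - D)"
    using D(1) finite_ground finite_subset by blast+
  have "iso M (dsum (map (\<lambda>(k, B). U k (card B)) [(card D - 1, D), (card (E - D), E - D)]))"
  proof (rule iso_dsum_uniformI)
    fix I assume I: "I \<subseteq> E"
    have "card (I \<inter> (E - D)) \<le> card (E - D)"
      using fin(2) by (intro card_mono) auto
    moreover have "D \<noteq> {}"
      using D(2) by auto
    ultimately show "ind I \<longleftrightarrow> (\<forall>(k, B)\<in>set [(card D - 1, D), (card (E - D), E - D)]. card (I \<inter> B) \<le> k)"
      using ind[OF I] card_Int_le_card_minus_1_iff[OF fin(1)] by auto
  qed (use fin D(1) in auto)
  moreover have "card (E - D) = card E - card D" "card D \<le> card E - 1"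
    using D fin card_Diff_subset[OF fin(1) D(1)] finite_ground
    by (auto simp: card_gt_0_iff Suc_le_eq)
  ultimately show ?thesis
    unfolding circuit_and_coloops_form_def using D(2) by (intro exI[of _ "card D"]) simp
qed

lemma loops_and_line_formI:
  assumes L: "L \<subseteq> E" "L \<noteq> {}" "3 \<le> card (E - L)"
    and ind: "\<And>I. I \<subseteq> E \<Longrightarrow> ind I \<longleftrightarrow> I \<inter> L = {} \<and> card (I \<inter> (E - L)) \<le> 1"
  shows "loops_and_line_form M (card E)"
proof -
  have fin: "finite L" "finite (E - L)"
    using L(1) finite_ground finite_subset by blast+
  have "iso M (dsum (map (\<lambda>(k, B). U k (card B)) [(0, L), (1, E - L)]))"
    by (rule iso_dsum_uniformI) (use fin L(1) ind in auto)
  moreover have "card L > 0"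
    using L(2) fin(1) by (simp add: card_gt_0_iff)
  then have "card L = card E - card (E - L)" "card (E - L) \<le> card E - 1"
    using card_Diff_subset[OF fin(1) L(1)] card_mono[OF finite_ground L(1)] by auto
  ultimately show ?thesis
    unfolding loops_and_line_form_def using L(3) by (intro exI[of _ "card (E - L)"]) simp
qed

lemma loops_pairs_coloops_formI:
  assumes L: "L \<subseteq> E" and Q: "Q \<subseteq> E" and PP: "\<And>P. P \<in> PP \<Longrightarrow> P \<subseteq> E \<and> card P = 2"
    and disj: "pairwise disjnt PP" "L \<inter> Q = {}" "L \<inter> \<Union>PP = {}" "Q \<inter> \<Union>PP = {}"
    and cover: "E = L \<union> Q \<union> \<Union>PP"
    and ind: "\<And>I. I \<subseteq> E \<Longrightarrow> ind I \<longleftrightarrow> I \<inter> L = {} \<and> (\<forall>P\<in>PP. card (I \<inter> P) \<le> 1)"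
  shows "loops_pairs_coloops_form M (card E)"
proof -
  have finPP: "finite PP"
    using PP finite_ground by (meson Pow_iff finite_Pow_iff finite_subset subsetI)
  then obtain ps where ps: "set ps = PP" "distinct ps"
    using finite_distinct_list by blast
  have fin: "finite L" "finite Q"
    using finite_subset[OF L finite_ground] finite_subset[OF Q finite_ground] .
  have finP: "finite P" if "P \<in> PP" for P
    using PP[OF that] finite_subset[OF _ finite_ground] by blast
  define bs where "bs = [(0, L)] @ map (\<lambda>P. (1, P)) ps @ [(card Q, Q)]"
  have "iso M (dsum (map (\<lambda>(k, B). U k (card B)) bs))"
  proof (rule iso_dsum_uniformI)
    have "sorted_wrt (\<lambda>A B. A \<inter> B = {}) ps"
      using ps disj(1) by (intro sorted_wrt_if_pairwise) (auto simp: pairwise_def disjnt_def)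
    then show "sorted_wrt (\<lambda>(_, A) (_, B). A \<inter> B = {}) bs"
      unfolding bs_def using disj(2-4) ps(1)
      by (auto simp: sorted_wrt_append sorted_wrt_map Int_commute)
    show "(\<Union>(_, B)\<in>set bs. B) = E"
      unfolding bs_def using cover ps(1) by auto
    fix I assume "I \<subseteq> E"
    then show "ind I \<longleftrightarrow> (\<forall>(k, B)\<in>set bs. card (I \<inter> B) \<le> k)"
      unfolding bs_def using ind fin ps(1) card_mono[OF fin(2), of "I \<inter> Q"] by auto
  qed (use fin finP ps(1) in \<open>auto simp: bs_def\<close>)
  moreover have "map (\<lambda>(k, B). U k (card B)) bs =
      [U 0 (card L)] @ replicate (length ps) (U 1 2) @ [U (card Q) (card Q)]"
    unfolding bs_def using PP ps(1) by (simp add: map_replicate_const[symmetric] cong: map_cong)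
  moreover have "card (\<Union>PP) = 2 * length ps"
    using card_Union_disjoint[OF disj(1)] finP PP ps distinct_card[OF ps(2)] by simp
  then have "card E = card L + card Q + 2 * length ps"
    using cover disj(2-4) fin finP finPP by (simp add: card_Un_disjoint Int_Un_distrib2)
  ultimately show ?thesis
    unfolding loops_pairs_coloops_form_def
    by (intro exI[of _ "length ps + card Q"] exI[of _ "length ps"]) simp
qed

definition loops :: "'a set" where
  "loops = {e \<in> E. circ {e}}"

definition parallel :: "'a \<Rightarrow> 'a \<Rightarrow> bool" where
  "parallel p q \<longleftrightarrow> p \<noteq> q \<and> circ {p, q}"

lemma indep_singleton_iff:
  assumes "u \<in> E"
  shows "ind {u} \<longleftrightarrow> u \<notin> loops"
proof -
  have "D \<subset> {u} \<Longrightarrow> D = {}" for D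
    by blast
  then show ?thesis
    using assms indep_empty unfolding loops_def circuit_def by blast
qed

lemma parallel_sym: "parallel p q \<Longrightarrow> parallel q p"
  unfolding parallel_def by (auto simp: insert_commute)

lemma parallel_in_ground: "parallel p q \<Longrightarrow> p \<in> E"
  unfolding parallel_def using circuit_subset_ground by blast

lemma parallel_not_loop: "parallel p q \<Longrightarrow> p \<notin> loops"
  unfolding parallel_def loops_def using circuit_incomparable[of "{p}" "{p, q}"] by auto

lemma parallel_trans:
  assumes "parallel p q" "parallel q s" "p \<noteq> s"
  shows "parallel p s"
proof -
  have pq: "circ {p, q}" "circ {q, s}" "p \<noteq> q"
    using assms unfolding parallel_def by auto
  obtain K where K: "circ K" "p \<in> K" "K \<subseteq> ({p, q} \<union> {q, s}) - {q}"
    using strong_circuit_elim[OF pq(1,2), of q p] pq(3) assms(3) by auto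
  then have "K = {p} \<or> K = {p, s}"
    by blast
  then have "K = {p, s}"
    using K(1) parallel_not_loop[OF assms(1)] circuit_subset_ground unfolding loops_def by blast
  then show ?thesis
    unfolding parallel_def using K(1) assms(3) by simp
qed

lemma indep_iff_no_loop_no_parallel:
  assumes small: "\<And>K. circ K \<Longrightarrow> card K \<le> 2" and I: "I \<subseteq> E"
  shows "ind I \<longleftrightarrow> I \<inter> loops = {} \<and> (\<forall>p\<in>I. \<forall>q\<in>I. \<not> parallel p q)"
proof -
  have "circ K \<Longrightarrow> (\<exists>e. K = {e}) \<or> (\<exists>p q. parallel p q \<and> K = {p, q})" for K
    using small[of K] circuit_nonempty[of K] finite_circuit[of K]
    by (auto simp: parallel_def le_Suc_eq numeral_2_eq_2 card_1_singleton_iff card_Suc_eq)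
  then have "(\<exists>K. circ K \<and> K \<subseteq> I) \<longleftrightarrow> (\<exists>e\<in>I. circ {e}) \<or> (\<exists>p\<in>I. \<exists>q\<in>I. parallel p q)"
    unfolding parallel_def by blast
  moreover have "(\<exists>e\<in>I. circ {e}) \<longleftrightarrow> I \<inter> loops \<noteq> {}"
    using I unfolding loops_def by blast
  ultimately show ?thesis
    using indep_iff_no_circuit[OF I] by blast
qed

lemma disjoint_parallel_pairs:
  assumes unique: "\<And>p q s. parallel p q \<Longrightarrow> parallel p s \<Longrightarrow> q = s"
  shows "pairwise disjnt {{p, q} | p q. parallel p q}"
proof (rule pairwiseI)
  fix P1 P2 assume P: "P1 \<in> {{p, q} | p q. parallel p q}" "P2 \<in> {{p, q} | p q. parallel p q}"
    "P1 \<noteq> P2"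
  have partner: "\<exists>w. parallel c w \<and> P = {c, w}" if "P \<in> {{p, q} | p q. parallel p q}" "c \<in> P"
    for P c
    using that parallel_sym by (auto simp: insert_commute)
  show "disjnt P1 P2"
  proof (rule ccontr)
    assume "\<not> disjnt P1 P2"
    then obtain c where c: "c \<in> P1" "c \<in> P2"
      unfolding disjnt_def by blast
    obtain w1 where w1: "parallel c w1" "P1 = {c, w1}"
      using partner[OF P(1) c(1)] by blast
    obtain w2 where w2: "parallel c w2" "P2 = {c, w2}"
      using partner[OF P(2) c(2)] by blast
    show False
      using unique[OF w1(1) w2(1)] w1(2) w2(2) P(3) by simp
  qed
qed

lemma indep_iff_parallel_pairs:
  assumes small: "\<And>K. circ K \<Longrightarrow> card K \<le> 2" and I: "I \<subseteq> E"
  shows "ind I \<longleftrightarrow> I \<inter> loops = {} \<and> (\<forall>P\<in>{{p, q} | p q. parallel p q}. card (I \<inter> P) \<le> 1)"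
proof -
  have "(\<forall>p\<in>I. \<forall>q\<in>I. \<not> parallel p q) \<longleftrightarrow> (\<forall>P\<in>{{p, q} | p q. parallel p q}. card (I \<inter> P) \<le> 1)"
  proof
    assume H: "\<forall>p\<in>I. \<forall>q\<in>I. \<not> parallel p q"
    show "\<forall>P\<in>{{p, q} | p q. parallel p q}. card (I \<inter> P) \<le> 1"
    proof
      fix P assume "P \<in> {{p, q} | p q. parallel p q}"
      then obtain a b where ab: "parallel a b" "P = {a, b}"
        by blast
      then have "\<not> (a \<in> I \<and> b \<in> I)"
        using H by blast
      then show "card (I \<inter> P) \<le> 1"
        unfolding ab(2) by (auto simp: card_le_Suc0_iff_eq)
    qed
  next
    assume H: "\<forall>P\<in>{{p, q} | p q. parallel p q}. card (I \<inter> P) \<le> 1"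
    show "\<forall>p\<in>I. \<forall>q\<in>I. \<not> parallel p q"
    proof (intro ballI notI)
      fix p q assume pq: "p \<in> I" "q \<in> I" "parallel p q"
      then have "card (I \<inter> {p, q}) \<le> 1"
        using H by blast
      then show False
        using pq unfolding parallel_def by (simp add: insert_absorb)
    qed
  qed
  then show ?thesis
    using indep_iff_no_loop_no_parallel[OF small I] by simp
qed

lemma loops_pairs_coloops_if_unique_partners:
  assumes small: "\<And>K. circ K \<Longrightarrow> card K \<le> 2"
    and unique: "\<And>p q s. parallel p q \<Longrightarrow> parallel p s \<Longrightarrow> q = s"
  shows "loops_pairs_coloops_form M (card E)"
proof -
  define PP where "PP = {{p, q} | p q. parallel p q}"
  define Q where "Q = {e \<in> E - loops. \<forall>q. \<not> parallel e q}"
  have PP: "\<exists>a b. parallel a b \<and> parallel b a \<and> P = {a, b}" if "P \<in> PP" for P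
    using that parallel_sym unfolding PP_def by blast
  have pairs: "P \<subseteq> E \<and> card P = 2" if "P \<in> PP" for P
    using PP[OF that] parallel_in_ground unfolding parallel_def by fastforce
  have disj: "loops \<inter> Q = {}" "loops \<inter> \<Union>PP = {}" "Q \<inter> \<Union>PP = {}"
    using PP parallel_not_loop unfolding Q_def by blast+
  have cover: "E = loops \<union> Q \<union> \<Union>PP"
  proof (intro equalityI subsetI)
    fix e assume e: "e \<in> E"
    show "e \<in> loops \<union> Q \<union> \<Union>PP"
    proof (cases "\<exists>q. parallel e q")
      case True
      then obtain q where "parallel e q"
        by blast
      then have "{e, q} \<in> PP"
        unfolding PP_def by blast
      then show ?thesis
        by blast
    qed (use e in \<open>auto simp: Q_def\<close>)
  qed (use PP parallel_in_ground in \<open>auto simp: loops_def Q_def\<close>)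
  have "loops \<subseteq> E" "Q \<subseteq> E"
    unfolding loops_def Q_def by blast+
  then show ?thesis
  proof (rule loops_pairs_coloops_formI[OF _ _ pairs _ disj cover])
    show "pairwise disjnt PP"
      unfolding PP_def by (rule disjoint_parallel_pairs[OF unique])
    show "ind I \<longleftrightarrow> I \<inter> loops = {} \<and> (\<forall>P\<in>PP. card (I \<inter> P) \<le> 1)" if "I \<subseteq> E" for I
      unfolding PP_def by (rule indep_iff_parallel_pairs[OF small that])
  qed
qed

end

context no_U11_U13
begin

text \<open>A non-loop \<open>t\<close> not parallel to the parallel class \<open>{p, q, s}\<close> would be a coloop next to it.\<close>
lemma parallel_to_parallel_triple:
  assumes small: "\<And>K. circ K \<Longrightarrow> card K \<le> 2"
    and pqs: "parallel p q" "parallel p s" "q \<noteq> s" and t: "t \<in> E - loops" "t \<noteq> p"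
  shows "parallel t p"
proof (rule ccontr)
  assume not_tp: "\<not> parallel t p"
  have qs: "parallel q s"
    using parallel_trans[OF parallel_sym[OF pqs(1)] pqs(2,3)] .
  have pqsE: "{p, q, s} \<subseteq> E - loops"
    using parallel_not_loop parallel_in_ground pqs qs parallel_sym by blast
  have rank_1: "r {u} = 1" if "u \<in> E - loops" for u
    using indep_singleton_iff[of u] that rank_indep by auto
  have two: "r (insert t (insert u {})) = r {} + 2" if u: "u \<in> {p, q, s}" for u
  proof -
    have "\<not> parallel t u" "\<not> parallel u t"
      using u not_tp t(2) parallel_trans pqs qs parallel_sym by blast+
    moreover have "t \<noteq> u"
      using t(2) u not_tp parallel_sym[OF pqs(1)] parallel_sym[OF pqs(2)] by auto
    ultimately have "ind {t, u}"
      using indep_iff_no_loop_no_parallel[OF small, of "{t, u}"] t(1) u pqsE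
      by (auto simp: parallel_def)
    then show ?thesis
      using rank_indep rank_empty \<open>t \<noteq> u\<close> by simp
  qed
  have par: "r ({} \<union> {p, q, s}) = r {} + 1"
  proof -
    have "r (insert u {p}) = r {p}" if "u \<in> {q, s}" for u
      using that pqs circuit_spans[of "{p, u}" u "{p}"] unfolding parallel_def by auto
    then have "r ({p} \<union> {q, s}) = r {p}"
      by (intro rank_Un_spanned) auto
    then show ?thesis
      using rank_1[of p] pqsE rank_empty by (simp add: insert_commute)
  qed
  have "distinct [p, q, s]"
    using pqs qs unfolding parallel_def by auto
  moreover have "{p, q, s} \<subseteq> E" "t \<in> E"
    using pqsE t(1) by blast+
  moreover have "r (insert t {}) = r {} + 1"
    using rank_1[OF t(1)] rank_empty by simp
  ultimately show False
    using no_coloop_and_parallel_triple[of "{}" t p q s, OF _ _ _ _ _ two par] by blast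
qed

lemma loops_and_line_if_parallel_triple:
  assumes small: "\<And>K. circ K \<Longrightarrow> card K \<le> 2" and disconn: "\<not> connected M"
    and pqs: "parallel p q" "parallel p s" "q \<noteq> s"
  shows "loops_and_line_form M (card E)"
proof -
  have qs: "parallel q s"
    using parallel_trans[OF parallel_sym[OF pqs(1)] pqs(2,3)] .
  have pqsE: "{p, q, s} \<subseteq> E - loops"
    using parallel_not_loop parallel_in_ground pqs qs parallel_sym by blast
  have "card {p, q, s} = 3"
    using pqs qs unfolding parallel_def by auto
  have par_non_loops: "parallel u v" if "u \<in> E - loops" "v \<in> E - loops" "u \<noteq> v" for u v
    using that parallel_to_parallel_triple[OF small pqs] parallel_trans parallel_sym by metis
  have "loops \<noteq> {}"
  proof
    assume "loops = {}"
    then have "connected M"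
      unfolding connected_def using par_non_loops by (auto simp: parallel_def)
    then show False
      using disconn by blast
  qed
  moreover have "3 \<le> card (E - loops)"
    using pqsE \<open>card {p, q, s} = 3\<close> card_mono[of "E - loops" "{p, q, s}"] finite_ground by auto
  moreover have "ind I \<longleftrightarrow> I \<inter> loops = {} \<and> card (I \<inter> (E - loops)) \<le> 1" if I: "I \<subseteq> E" for I
  proof (cases "I \<inter> loops = {}")
    case True
    then have "I \<inter> (E - loops) = I" "I \<subseteq> E - loops"
      using I by blast+
    moreover have "finite I"
      using I finite_ground finite_subset by blast
    moreover have "(\<forall>p\<in>I. \<forall>q\<in>I. \<not> parallel p q) \<longleftrightarrow> (\<forall>p\<in>I. \<forall>q\<in>I. p = q)"
      using \<open>I \<subseteq> E - loops\<close> par_non_loops unfolding parallel_def by blast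
    ultimately show ?thesis
      using indep_iff_no_loop_no_parallel[OF small I] True by (simp add: card_le_Suc0_iff_eq)
  qed (use indep_iff_no_loop_no_parallel[OF small I] in simp)
  ultimately show ?thesis
    using loops_and_line_formI[of loops] unfolding loops_def by blast
qed

lemma small_circuits_classification:
  assumes small: "\<And>K. circ K \<Longrightarrow> card K \<le> 2" and disconn: "\<not> connected M"
  shows "loops_pairs_coloops_form M (card E) \<or> loops_and_line_form M (card E)"
proof (cases "\<exists>p q s. parallel p q \<and> parallel p s \<and> q \<noteq> s")
  case True
  then show ?thesis
    using loops_and_line_if_parallel_triple[OF small disconn] by blast
next
  case False
  then show ?thesis
    using loops_pairs_coloops_if_unique_partners[OF small] by blast
qed

end

context no_U01_U23_U11_U13
begin

lemma big_circuit_unique_if_coloop: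
  assumes z: "z \<in> E" "\<And>K. circ K \<Longrightarrow> z \<notin> K"
    and D: "circ D" "3 \<le> card D" and K: "circ K"
  shows "K = D"
proof (rule ccontr)
  assume "K \<noteq> D"
  have "r (E - {z}) < r E"
  proof (rule ccontr)
    assume "\<not> r (E - {z}) < r E"
    then have "r (insert z (E - {z})) = r (E - {z})"
      using rank_mono[of "E - {z}" E] z(1) by (simp add: insert_absorb)
    then show False
      using spanned_circuit[of "E - {z}" z] z by blast
  qed
  then have disj: "K1 \<inter> K2 = {}" if "circ K1" "circ K2" "K1 \<noteq> K2" for K1 K2
    using circuits_disjoint_if_coloop[of E z K1 K2] z(1) that circuit_subset_ground by blast
  obtain w where "w \<in> K"
    using circuit_nonempty[OF K] by blast
  then have "card D \<le> 2"
    using circuit_card_le_2_if_separated[OF K _ D(1)] disj[OF D(1) K] \<open>K \<noteq> D\<close> disj D(1)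
    by blast
  then show False
    using D(2) by simp
qed

lemma disconnected_classification:
  assumes disconn: "\<not> connected M"
  shows "loops_pairs_coloops_form M (card E) \<or> loops_and_line_form M (card E) \<or>
    circuit_and_coloops_form M (card E)"
proof (cases "\<exists>D. circ D \<and> 3 \<le> card D")
  case True
  then obtain D where D: "circ D" "3 \<le> card D"
    by blast
  then obtain z where z: "z \<in> E" "\<And>K. circ K \<Longrightarrow> z \<notin> K"
    using circuit_card_le_2_if_disconnected[OF disconn] by fastforce
  then have "ind I \<longleftrightarrow> \<not> D \<subseteq> I" if "I \<subseteq> E" for I
    using indep_iff_no_circuit[OF that] big_circuit_unique_if_coloop[OF z D] D(1) by blast
  moreover have "E - D \<noteq> {}"
    using z D(1) by blast
  ultimately have "circuit_and_coloops_form M (card E)"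
    using circuit_and_coloops_formI[OF circuit_subset_ground[OF D(1)] D(2)] by blast
  then show ?thesis
    by blast
next
  case False
  then show ?thesis
    using small_circuits_classification[OF _ disconn] by fastforce
qed

end

theorem lemma4p5:
  fixes M :: "'a matroid" and n :: nat
  assumes "matroid M"
    and "\<not> has_minor_iso M (dsum [U 1 1, U 1 3])"
    and "\<not> has_minor_iso M (dsum [U 0 1, U 2 3])"
    and "card (ground M) = n"
  shows "(connected M \<and> sparse_paving M) \<or>
         (\<not> connected M \<and>
           ((\<exists>k l. k \<le> n \<and> l \<le> min k (n - k) \<and>
               iso M (dsum ([U 0 (n - k - l)] @ replicate l (U 1 2) @ [U (k - l) (k - l)]))) \<or>
            (\<exists>l. 3 \<le> l \<and> l \<le> n - 1 \<and> iso M (dsum [U 0 (n - l), U 1 l])) \<or>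
            (\<exists>l. 3 \<le> l \<and> l \<le> n - 1 \<and> iso M (dsum [U (l - 1) l, U (n - l) (n - l)]))))"
proof -
  interpret no_U01_U23_U11_U13 M
    by unfold_locales (fact assms)+
  show ?thesis
  proof (cases "connected M")
    case True
    then show ?thesis
      using connected_imp_sparse_paving by blast
  next
    case False
    then show ?thesis
      using disconnected_classification[OF False] assms(4)
      unfolding loops_pairs_coloops_form_def loops_and_line_form_def circuit_and_coloops_form_def
      by blast
  qed
qed

end
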